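(* There exist an $\mathrm{FO}$-convergent sequence of finite graphs $(G_n)_{n\in\mathbb{N}}$ and a first-order formula $\xi(x)$ in the language of graphs with one free variable, satisfying $G_n\models(\exists x)\xi(x)$ for all $n$, such that there is no sequence $(r_n)$ with $r_n\in\xi(G_n)$ for which the sequence of rooted graphs $(G_n,r_n)$ is $\mathrm{FO}$-convergent.
   Context: Graphs are first-order structures in the language with one binary (edge) relation. For a formula $\phi$ with $p$ free variables and a structure $G$, $\phi(G)=\{\mathbf{v}\in V(G)^p : G\models\phi(\mathbf{v})\}$. The Stone pairing of $\phi$ ($p\ge1$) with a finite graph $G$ is $\langle\phi,G\rangle=|\phi(G)|/|V(G)|^p$; for sentences it is $1$ if $G\models\phi$ and $0$ otherwise. A sequence of finite graphs $(G_n)$ is $\mathrm{FO}$-convergent if $(\langle\phi,G_n\rangle)$ converges for every first-order formula $\phi$. The language of rooted graphs adds a constant symbol $\mathrm{Root}$; $(G,r)$ is $G$ with $\mathrm{Root}$ interpreted as the vertex $r$. A sequence of rooted finite graphs $(G_n,r_n)$ is $\mathrm{FO}$-convergent if $(\langle\phi,(G_n,r_n)\rangle)$ converges for every first-order formula $\phi$ in the language of rooted graphs (Stone pairings defined in the same way). *)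

theory Defs
  imports Complex_Main "HOL-Library.FuncSet"
begin

record graph =
  verts :: "nat set"
  adj   :: "nat \<Rightarrow> nat \<Rightarrow> bool"

definition finite_graph :: "graph \<Rightarrow> bool" where
  "finite_graph G \<longleftrightarrow> finite (verts G) \<and> verts G \<noteq> {} \<and>
     (\<forall>u v. adj G u v \<longrightarrow> u \<in> verts G \<and> v \<in> verts G) \<and>
     (\<forall>u v. adj G u v \<longrightarrow> adj G v u) \<and> (\<forall>v. \<not> adj G v v)"

text \<open>First-order formulas in the language of rooted graphs: variables are
  indexed by nat; the constant symbol Root is the term Rt.\<close>
datatype fterm = Var nat | Rt

datatype form =
    FEq fterm fterm
  | FAdj fterm fterm
  | FNot form
  | FAnd form form
  | FEx nat form

fun tvars :: "fterm \<Rightarrow> nat set" where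
  "tvars (Var i) = {i}"
| "tvars Rt = {}"

fun fv :: "form \<Rightarrow> nat set" where
  "fv (FEq s t) = tvars s \<union> tvars t"
| "fv (FAdj s t) = tvars s \<union> tvars t"
| "fv (FNot p) = fv p"
| "fv (FAnd p q) = fv p \<union> fv q"
| "fv (FEx i p) = fv p - {i}"

text \<open>Formulas of the language of (unrooted) graphs: no occurrence of Root.\<close>
fun troot :: "fterm \<Rightarrow> bool" where
  "troot (Var i) = False"
| "troot Rt = True"

fun no_root :: "form \<Rightarrow> bool" where
  "no_root (FEq s t) = (\<not> troot s \<and> \<not> troot t)"
| "no_root (FAdj s t) = (\<not> troot s \<and> \<not> troot t)"
| "no_root (FNot p) = no_root p"
| "no_root (FAnd p q) = (no_root p \<and> no_root q)"
| "no_root (FEx i p) = no_root p"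

fun teval :: "nat \<Rightarrow> (nat \<Rightarrow> nat) \<Rightarrow> fterm \<Rightarrow> nat" where
  "teval r e (Var i) = e i"
| "teval r e Rt = r"

fun sat :: "graph \<Rightarrow> nat \<Rightarrow> (nat \<Rightarrow> nat) \<Rightarrow> form \<Rightarrow> bool" where
  "sat G r e (FEq s t) = (teval r e s = teval r e t)"
| "sat G r e (FAdj s t) = adj G (teval r e s) (teval r e t)"
| "sat G r e (FNot p) = (\<not> sat G r e p)"
| "sat G r e (FAnd p q) = (sat G r e p \<and> sat G r e q)"
| "sat G r e (FEx i p) = (\<exists>v\<in>verts G. sat G r (e(i := v)) p)"

text \<open>Stone pairing of a formula with the rooted graph (G, r):
  the fraction of assignments of the free variables into V(G) satisfying the
  formula (for sentences this is 1 or 0 according to satisfaction).\<close>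
definition stone_rooted :: "form \<Rightarrow> graph \<Rightarrow> nat \<Rightarrow> real" where
  "stone_rooted \<phi> G r =
     real (card {e \<in> fv \<phi> \<rightarrow>\<^sub>E verts G. sat G r e \<phi>}) / real (card (verts G)) ^ card (fv \<phi>)"

text \<open>Stone pairing for formulas of the graph language (the root is irrelevant
  for Root-free formulas; we pick an arbitrary vertex).\<close>
definition stone :: "form \<Rightarrow> graph \<Rightarrow> real" where
  "stone \<phi> G = stone_rooted \<phi> G (SOME v. v \<in> verts G)"

definition FO_convergent :: "(nat \<Rightarrow> graph) \<Rightarrow> bool" where
  "FO_convergent G \<longleftrightarrow> (\<forall>\<phi>. no_root \<phi> \<longrightarrow> convergent (\<lambda>n. stone \<phi> (G n)))"

definition FO_convergent_rooted :: "(nat \<Rightarrow> graph) \<Rightarrow> (nat \<Rightarrow> nat) \<Rightarrow> bool" where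
  "FO_convergent_rooted G r \<longleftrightarrow> (\<forall>\<phi>. convergent (\<lambda>n. stone_rooted \<phi> (G n) (r n)))"

text \<open>\<xi>(G) for a formula with the single free variable 0.\<close>
definition defset :: "form \<Rightarrow> graph \<Rightarrow> nat set" where
  "defset \<xi> G = {v \<in> verts G. sat G (SOME v. v \<in> verts G) (\<lambda>_. v) \<xi>}"

end

theory Submission
  imports Defs
begin

text \<open>
  For D = n + 1 let G_n have D centres and 5^D leaves, one for each labelling u of the
  centres by 0, ..., 4; centre c and leaf u are adjacent iff u(c) < a_n, where a_n is 2
  or 3 according to the parity of n. Centres are exactly the vertices having two distinct
  neighbours with the same neighbourhood, which is expressed by a formula \<xi>.

  For a formula of quantifier depth q with k free variables, almost all k-tuples of
  vertices are generic: they consist of distinct leaves and, for every adjacency pattern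
  towards the tuple, at least 2^q centres realise it. Duplicator wins the q-round
  Ehrenfeucht-Fraisse game between two generic tuples (in G_n and G_m, with n, m large),
  so the Stone pairing tends to 0 or 1. With r rounds left, Duplicator keeps a partial
  isomorphism under which, for every adjacency pattern towards the chosen leaves, the
  numbers of free centres realising it agree up to the threshold 2^r; a new leaf is
  answered by a fresh leaf whose labels are taken from {0, 1} or {3, 4} as needed.

  On the other hand, a root in \<xi>(G_n) is a centre, and the fraction of vertices adjacent
  to it is about a_n / 5, which oscillates between 2/5 and 3/5.
\<close>

section \<open>Satisfaction in abstract structures\<close>

fun tval :: "'a \<Rightarrow> (nat \<Rightarrow> 'a) \<Rightarrow> fterm \<Rightarrow> 'a" where
  "tval r e (Var i) = e i"
| "tval r e Rt = r"

fun sat_on :: "'a set \<Rightarrow> ('a \<Rightarrow> 'a \<Rightarrow> bool) \<Rightarrow> 'a \<Rightarrow> (nat \<Rightarrow> 'a) \<Rightarrow> form \<Rightarrow> bool" where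
  "sat_on V E r e (FEq s t) = (tval r e s = tval r e t)"
| "sat_on V E r e (FAdj s t) = E (tval r e s) (tval r e t)"
| "sat_on V E r e (FNot p) = (\<not> sat_on V E r e p)"
| "sat_on V E r e (FAnd p q) = (sat_on V E r e p \<and> sat_on V E r e q)"
| "sat_on V E r e (FEx i p) = (\<exists>v\<in>V. sat_on V E r (e(i := v)) p)"

definition stone_on :: "'a set \<Rightarrow> ('a \<Rightarrow> 'a \<Rightarrow> bool) \<Rightarrow> 'a \<Rightarrow> form \<Rightarrow> real" where
  "stone_on V E r \<phi> =
     real (card {e \<in> fv \<phi> \<rightarrow>\<^sub>E V. sat_on V E r e \<phi>}) / real (card V) ^ card (fv \<phi>)"

fun qdepth :: "form \<Rightarrow> nat" where
  "qdepth (FEq s t) = 0"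
| "qdepth (FAdj s t) = 0"
| "qdepth (FNot p) = qdepth p"
| "qdepth (FAnd p q) = max (qdepth p) (qdepth q)"
| "qdepth (FEx i p) = Suc (qdepth p)"

lemma finite_tvars: "finite (tvars s)"
  by (cases s) auto

lemma finite_fv: "finite (fv \<phi>)"
  by (induction \<phi>) (auto simp: finite_tvars)

lemma tval_cong: "(\<And>i. i \<in> tvars s \<Longrightarrow> e i = e' i) \<Longrightarrow> tval r e s = tval r e' s"
  by (cases s) auto

lemma sat_on_cong: "(\<And>i. i \<in> fv \<phi> \<Longrightarrow> e i = e' i) \<Longrightarrow> sat_on V E r e \<phi> = sat_on V E r e' \<phi>"
proof (induction \<phi> arbitrary: e e')
  case (FEq s t)
  then show ?case using tval_cong[of s e e'] tval_cong[of t e e'] by simp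
next
  case (FAdj s t)
  then show ?case using tval_cong[of s e e'] tval_cong[of t e e'] by simp
next
  case (FNot p)
  have "sat_on V E r e p = sat_on V E r e' p"
    by (rule FNot.IH) (use FNot.prems in auto)
  then show ?case by simp
next
  case (FAnd p q)
  have "sat_on V E r e p = sat_on V E r e' p"
    by (rule FAnd.IH(1)) (use FAnd.prems in auto)
  moreover have "sat_on V E r e q = sat_on V E r e' q"
    by (rule FAnd.IH(2)) (use FAnd.prems in auto)
  ultimately show ?case by simp
next
  case (FEx i p)
  have "sat_on V E r (e(i := v)) p = sat_on V E r (e'(i := v)) p" for v
    by (rule FEx.IH) (use FEx.prems in auto)
  then show ?case by simp
qed

lemma sat_on_no_root: "no_root \<phi> \<Longrightarrow> sat_on V E r e \<phi> = sat_on V E r' e \<phi>"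
proof (induction \<phi> arbitrary: e)
  case (FEq s t) then show ?case by (cases s; cases t) auto
next
  case (FAdj s t) then show ?case by (cases s; cases t) auto
qed auto

lemma stone_on_no_root:
  assumes "no_root \<phi>"
  shows "stone_on V E r \<phi> = stone_on V E r' \<phi>"
  unfolding stone_on_def using sat_on_no_root[OF assms, where r = r and r' = r'] by simp

lemma teval_in_verts: "r \<in> V \<Longrightarrow> (\<And>i. i \<in> tvars s \<Longrightarrow> e i \<in> V) \<Longrightarrow> teval r e s \<in> V"
  by (cases s) auto

lemma teval_comp: "g (teval r e s) = tval (g r) (g \<circ> e) s"
  by (cases s) auto

lemma sat_iso:
  assumes g: "bij_betw g (verts G) V"
    and E: "\<And>x y. x \<in> verts G \<Longrightarrow> y \<in> verts G \<Longrightarrow> adj G x y = E (g x) (g y)"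
    and "r \<in> verts G" "\<And>i. i \<in> fv \<phi> \<Longrightarrow> e i \<in> verts G"
  shows "sat G r e \<phi> = sat_on V E (g r) (g \<circ> e) \<phi>"
  using assms(3,4)
proof (induction \<phi> arbitrary: e)
  case (FEq s t)
  have "teval r e s \<in> verts G" "teval r e t \<in> verts G"
    using FEq.prems by (auto intro: teval_in_verts)
  then have "(teval r e s = teval r e t) = (g (teval r e s) = g (teval r e t))"
    by (simp add: inj_on_eq_iff[OF bij_betw_imp_inj_on[OF g]])
  then show ?case by (simp only: sat.simps sat_on.simps teval_comp[of g])
next
  case (FAdj s t)
  have "teval r e s \<in> verts G" "teval r e t \<in> verts G"
    using FAdj.prems by (auto intro: teval_in_verts)
  then show ?case using E by (simp only: sat.simps sat_on.simps teval_comp[of g])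
next
  case (FEx i p)
  have "sat G r (e(i := v)) p = sat_on V E (g r) ((g \<circ> e)(i := g v)) p" if "v \<in> verts G" for v
  proof -
    have "(e(i := v)) j \<in> verts G" if "j \<in> fv p" for j
      using FEx.prems(2) \<open>v \<in> verts G\<close> that by auto
    then show ?thesis
      using FEx.IH[OF FEx.prems(1)] by (simp only: fun_upd_comp)
  qed
  then have "sat G r e (FEx i p) = (\<exists>v\<in>verts G. sat_on V E (g r) ((g \<circ> e)(i := g v)) p)"
    by auto
  also have "\<dots> = sat_on V E (g r) (g \<circ> e) (FEx i p)"
    using bij_betw_imp_surj_on[OF g] by auto
  finally show ?case .
qed auto

lemma card_PiE_bij_betw_comp:
  assumes g: "bij_betw g W V"
    and P: "\<And>e e'. (\<And>i. i \<in> X \<Longrightarrow> e i = e' i) \<Longrightarrow> P e = P e'"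
  shows "card {e \<in> X \<rightarrow>\<^sub>E W. P (g \<circ> e)} = card {e \<in> X \<rightarrow>\<^sub>E V. P e}"
proof -
  let ?h = "\<lambda>e. restrict (g \<circ> e) X"
  have "bij_betw ?h (X \<rightarrow>\<^sub>E W) (X \<rightarrow>\<^sub>E V)"
  proof (rule bij_betwI')
    show "(?h x = ?h y) = (x = y)" if x: "x \<in> X \<rightarrow>\<^sub>E W" and y: "y \<in> X \<rightarrow>\<^sub>E W" for x y
    proof
      assume eq: "?h x = ?h y"
      show "x = y"
      proof (rule PiE_ext[OF x y])
        fix i assume i: "i \<in> X"
        then have "g (x i) = g (y i)" using fun_cong[OF eq, of i] by simp
        then show "x i = y i"
          using inj_onD[OF bij_betw_imp_inj_on[OF g]] x y i by blast
      qed
    qed simp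
    show "?h x \<in> X \<rightarrow>\<^sub>E V" if "x \<in> X \<rightarrow>\<^sub>E W" for x
      using that bij_betwE[OF g] by auto
    show "\<exists>x\<in>X \<rightarrow>\<^sub>E W. y = ?h x" if "y \<in> X \<rightarrow>\<^sub>E V" for y
    proof
      have "y i \<in> g ` W" if "i \<in> X" for i
        using \<open>y \<in> X \<rightarrow>\<^sub>E V\<close> that bij_betw_imp_surj_on[OF g] by auto
      then show "restrict (inv_into W g \<circ> y) X \<in> X \<rightarrow>\<^sub>E W"
        and "y = ?h (restrict (inv_into W g \<circ> y) X)"
        using \<open>y \<in> X \<rightarrow>\<^sub>E V\<close>
        by (auto simp: inv_into_into f_inv_into_f fun_eq_iff PiE_iff extensional_def)
    qed
  qed
  moreover have "P (?h e) = P (g \<circ> e)" for e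
    by (rule P) simp
  ultimately show ?thesis
    by (intro bij_betw_same_card[OF bij_betw_Collect[where f = ?h]]) auto
qed

lemma stone_rooted_iso:
  assumes g: "bij_betw g (verts G) V"
    and E: "\<And>x y. x \<in> verts G \<Longrightarrow> y \<in> verts G \<Longrightarrow> adj G x y = E (g x) (g y)"
    and r: "r \<in> verts G"
  shows "stone_rooted \<phi> G r = stone_on V E (g r) \<phi>"
proof -
  have "{e \<in> fv \<phi> \<rightarrow>\<^sub>E verts G. sat G r e \<phi>}
      = {e \<in> fv \<phi> \<rightarrow>\<^sub>E verts G. sat_on V E (g r) (g \<circ> e) \<phi>}"
    using sat_iso[OF g E r] by (auto simp: PiE_iff)
  also have "card \<dots> = card {e \<in> fv \<phi> \<rightarrow>\<^sub>E V. sat_on V E (g r) e \<phi>}"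
    by (rule card_PiE_bij_betw_comp[OF g]) (rule sat_on_cong)
  finally show ?thesis
    unfolding stone_rooted_def stone_on_def using bij_betw_same_card[OF g] by simp
qed

section \<open>Centre-leaf graphs\<close>

text \<open>Centre c is \<open>Inl c\<close> and the leaf labelled u is \<open>Inr u\<close>; they are adjacent iff u(c) < a.\<close>

type_synonym cl_vert = "nat + (nat \<Rightarrow> nat)"

definition leaf_labels :: "nat \<Rightarrow> (nat \<Rightarrow> nat) set" where
  "leaf_labels D = {..<D} \<rightarrow>\<^sub>E {..<5}"

definition cl_verts :: "nat \<Rightarrow> cl_vert set" where
  "cl_verts D = Inl ` {..<D} \<union> Inr ` leaf_labels D"

fun cl_adj :: "nat \<Rightarrow> cl_vert \<Rightarrow> cl_vert \<Rightarrow> bool" where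
  "cl_adj a (Inl c) (Inr u) = (u c < a)"
| "cl_adj a (Inr u) (Inl c) = (u c < a)"
| "cl_adj a (Inl c) (Inl d) = False"
| "cl_adj a (Inr u) (Inr w) = False"

lemma cl_adj_sym: "cl_adj a x y = cl_adj a y x"
  by (cases x; cases y) auto

lemma cl_adj_same_side: "isl x = isl y \<Longrightarrow> \<not> cl_adj a x y"
  by (cases x; cases y) auto

lemma finite_leaf_labels: "finite (leaf_labels D)"
  by (simp add: leaf_labels_def finite_PiE)

lemma card_leaf_labels: "card (leaf_labels D) = 5 ^ D"
  by (simp add: leaf_labels_def card_PiE)

lemma finite_cl_verts: "finite (cl_verts D)"
  by (simp add: cl_verts_def finite_leaf_labels)

lemma card_cl_verts: "card (cl_verts D) = D + 5 ^ D"
proof -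
  have "card (cl_verts D) = card (Inl ` {..<D} :: cl_vert set) + card (Inr ` leaf_labels D :: cl_vert set)"
    unfolding cl_verts_def by (rule card_Un_disjoint) (auto simp: finite_leaf_labels)
  also have "\<dots> = D + 5 ^ D"
    by (simp add: card_image card_leaf_labels)
  finally show ?thesis .
qed

section \<open>An Ehrenfeucht-Fraisse invariant\<close>

definition pattern_centres :: "nat \<Rightarrow> nat \<Rightarrow> (nat \<Rightarrow> cl_vert) \<Rightarrow> nat set \<Rightarrow> nat set \<Rightarrow> nat set" where
  "pattern_centres D a e X P = {c. c < D \<and> (\<forall>x\<in>X. e x \<noteq> Inl c) \<and>
      (\<forall>x\<in>X. \<not> isl (e x) \<longrightarrow> (cl_adj a (Inl c) (e x) \<longleftrightarrow> x \<in> P))}"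

lemma finite_pattern_centres: "finite (pattern_centres D a e X P)"
  by (rule finite_subset[of _ "{..<D}"]) (auto simp: pattern_centres_def)

lemma pattern_centres_leaves_only:
  "pattern_centres D a e X P = pattern_centres D a e X {x\<in>X. \<not> isl (e x) \<and> x \<in> P}"
  unfolding pattern_centres_def by auto

lemma pattern_centres_change:
  "c \<in> pattern_centres D a e X P \<Longrightarrow>
    c \<in> pattern_centres D a e X Q \<longleftrightarrow> (\<forall>x\<in>X. \<not> isl (e x) \<longrightarrow> (x \<in> P \<longleftrightarrow> x \<in> Q))"
  unfolding pattern_centres_def by auto

lemma pattern_centres_insert:
  "i \<notin> X \<Longrightarrow> pattern_centres D a (e(i := v)) (insert i X) P =
     {c \<in> pattern_centres D a e X (P - {i}). v \<noteq> Inl c \<and> (\<not> isl v \<longrightarrow> (cl_adj a (Inl c) v \<longleftrightarrow> i \<in> P))}"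
  unfolding pattern_centres_def by auto

lemma pattern_centres_insert_old:
  assumes "i \<notin> X" "j \<in> X"
  shows "pattern_centres D a (e(i := e j)) (insert i X) P =
    (if isl (e j) \<or> (j \<in> P \<longleftrightarrow> i \<in> P) then pattern_centres D a e X (P - {i}) else {})"
  using assms unfolding pattern_centres_insert[OF assms(1)] by (auto simp: pattern_centres_def)

lemma card_pattern_centres_remove_leaf:
  assumes "i \<in> X" "e i = Inr u" "P \<subseteq> X - {i}"
  shows "card (pattern_centres D a e (X - {i}) P)
    = card (pattern_centres D a e X P) + card (pattern_centres D a e X (insert i P))"
proof -
  have "c \<in> pattern_centres D a e X P \<union> pattern_centres D a e X (insert i P)"
    if "c \<in> pattern_centres D a e (X - {i}) P" for c
    using that assms by (cases "u c < a") (auto simp: pattern_centres_def)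
  then have "pattern_centres D a e (X - {i}) P = pattern_centres D a e X P \<union> pattern_centres D a e X (insert i P)"
    using assms by (auto simp: pattern_centres_def)
  moreover have "i \<notin> P" "\<not> isl (e i)"
    using assms by auto
  then have "pattern_centres D a e X P \<inter> pattern_centres D a e X (insert i P) = {}"
    using \<open>i \<in> X\<close> unfolding pattern_centres_def by blast
  ultimately show ?thesis
    by (simp add: card_Un_disjoint finite_pattern_centres)
qed

lemma card_pattern_centres_remove_centre:
  assumes "i \<in> X" "e i = Inl c"
  shows "card (pattern_centres D a e (X - {i}) P)
    = card (pattern_centres D a e X P) + (if c \<in> pattern_centres D a e (X - {i}) P then 1 else 0)"
proof -
  have "pattern_centres D a e X P = pattern_centres D a e (X - {i}) P - {c}"
    using assms by (auto simp: pattern_centres_def)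
  then show ?thesis
    using card_Suc_Diff1[OF finite_pattern_centres] by auto
qed

text \<open>Counts that the r-round game cannot tell apart.\<close>

definition eq_upto :: "nat \<Rightarrow> nat \<Rightarrow> nat \<Rightarrow> bool" where
  "eq_upto r m n \<longleftrightarrow> m = n \<or> (2 ^ r \<le> m \<and> 2 ^ r \<le> n)"

lemma eq_upto_sym: "eq_upto r m n = eq_upto r n m"
  unfolding eq_upto_def by auto

lemma eq_upto_add: "eq_upto r m n \<Longrightarrow> eq_upto r m' n' \<Longrightarrow> eq_upto r (m + m') (n + n')"
  unfolding eq_upto_def by auto

lemma eq_upto_add_same: "eq_upto r m n \<Longrightarrow> eq_upto r (m + d) (n + d)"
  unfolding eq_upto_def by auto

lemma eq_upto_pos: "eq_upto r m n \<Longrightarrow> 0 < m \<Longrightarrow> 0 < n"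
  unfolding eq_upto_def by (metis le_trans not_le one_le_numeral one_le_power less_one)

lemma eq_upto_Suc: "eq_upto (Suc r) m n \<Longrightarrow> eq_upto r m n"
  unfolding eq_upto_def by auto

lemma eq_upto_Suc_diff: "eq_upto (Suc r) m n \<Longrightarrow> d \<le> 1 \<Longrightarrow> eq_upto r (m - d) (n - d)"
  unfolding eq_upto_def by auto

text \<open>
  Splitting n1 = k1 + (n1 - k1) in the r + 1 round game is answered by a split of n2 whose
  parts match in the r round game.
\<close>

definition split_answer :: "nat \<Rightarrow> nat \<Rightarrow> nat \<Rightarrow> nat \<Rightarrow> nat" where
  "split_answer r n1 n2 k1 = (if n1 = n2 then k1 else if k1 < 2 ^ r then k1
      else if n1 - k1 < 2 ^ r then n2 - (n1 - k1) else 2 ^ r)"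

lemma split_answer:
  assumes "eq_upto (Suc r) n1 n2" "k1 \<le> n1"
  shows "split_answer r n1 n2 k1 \<le> n2" "eq_upto r k1 (split_answer r n1 n2 k1)"
    "eq_upto r (n1 - k1) (n2 - split_answer r n1 n2 k1)"
  using assms unfolding split_answer_def eq_upto_def by auto

text \<open>
  Duplicator's invariant in the Ehrenfeucht-Fraisse game on (D1, a1) and (D2, a2) with r
  rounds remaining; the bound on card X guarantees fresh leaves with any adjacency to the
  centres (there are 2^D candidates).
\<close>

definition ef_inv :: "nat \<Rightarrow> nat \<Rightarrow> nat \<Rightarrow> nat \<Rightarrow> nat \<Rightarrow> nat set \<Rightarrow> (nat \<Rightarrow> cl_vert) \<Rightarrow> (nat \<Rightarrow> cl_vert) \<Rightarrow> bool" where
  "ef_inv D1 a1 D2 a2 r X e1 e2 \<longleftrightarrow> finite X \<and> card X + r \<le> D1 \<and> card X + r \<le> D2 \<and>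
     (\<forall>x\<in>X. e1 x \<in> cl_verts D1 \<and> e2 x \<in> cl_verts D2 \<and> isl (e1 x) = isl (e2 x)) \<and>
     (\<forall>x\<in>X. \<forall>y\<in>X. (e1 x = e1 y) = (e2 x = e2 y)) \<and>
     (\<forall>x\<in>X. \<forall>y\<in>X. cl_adj a1 (e1 x) (e1 y) = cl_adj a2 (e2 x) (e2 y)) \<and>
     (\<forall>P\<subseteq>X. eq_upto r (card (pattern_centres D1 a1 e1 X P)) (card (pattern_centres D2 a2 e2 X P)))"

lemma ef_invD:
  assumes "ef_inv D1 a1 D2 a2 r X e1 e2"
  shows "finite X" "card X + r \<le> D1" "card X + r \<le> D2"
    and "x \<in> X \<Longrightarrow> e1 x \<in> cl_verts D1" "x \<in> X \<Longrightarrow> e2 x \<in> cl_verts D2"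
    and "x \<in> X \<Longrightarrow> isl (e1 x) = isl (e2 x)"
    and "x \<in> X \<Longrightarrow> y \<in> X \<Longrightarrow> (e1 x = e1 y) = (e2 x = e2 y)"
    and "x \<in> X \<Longrightarrow> y \<in> X \<Longrightarrow> cl_adj a1 (e1 x) (e1 y) = cl_adj a2 (e2 x) (e2 y)"
    and "P \<subseteq> X \<Longrightarrow> eq_upto r (card (pattern_centres D1 a1 e1 X P)) (card (pattern_centres D2 a2 e2 X P))"
  using assms unfolding ef_inv_def by blast+

lemma ef_inv_sym:
  assumes "ef_inv D1 a1 D2 a2 r X e1 e2"
  shows "ef_inv D2 a2 D1 a1 r X e2 e1"
  using ef_invD[OF assms] unfolding ef_inv_def by (auto simp: eq_upto_sym)

lemma eq_upto_pattern_centres_remove: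
  assumes H: "ef_inv D1 a1 D2 a2 r X e1 e2" and "i \<in> X" and P: "P \<subseteq> X - {i}"
  shows "eq_upto r (card (pattern_centres D1 a1 e1 (X - {i}) P)) (card (pattern_centres D2 a2 e2 (X - {i}) P))"
proof -
  note h = ef_invD[OF H]
  show ?thesis
  proof (cases "isl (e1 i)")
    case True
    then obtain c1 c2 where c: "e1 i = Inl c1" "e2 i = Inl c2"
      using h(6)[OF \<open>i \<in> X\<close>] by (cases "e1 i"; cases "e2 i") auto
    have "c1 < D1" "c2 < D2"
      using h(4,5)[OF \<open>i \<in> X\<close>] c by (auto simp: cl_verts_def)
    then have "(c1 \<in> pattern_centres D1 a1 e1 (X - {i}) P) =
        ((\<forall>x\<in>X - {i}. e1 x \<noteq> e1 i) \<and> (\<forall>x\<in>X - {i}. \<not> isl (e1 x) \<longrightarrow> (cl_adj a1 (e1 i) (e1 x) \<longleftrightarrow> x \<in> P)))"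
      and "(c2 \<in> pattern_centres D2 a2 e2 (X - {i}) P) =
        ((\<forall>x\<in>X - {i}. e2 x \<noteq> e2 i) \<and> (\<forall>x\<in>X - {i}. \<not> isl (e2 x) \<longrightarrow> (cl_adj a2 (e2 i) (e2 x) \<longleftrightarrow> x \<in> P)))"
      unfolding pattern_centres_def using c by auto
    moreover have "((\<forall>x\<in>X - {i}. e1 x \<noteq> e1 i) \<and> (\<forall>x\<in>X - {i}. \<not> isl (e1 x) \<longrightarrow> (cl_adj a1 (e1 i) (e1 x) \<longleftrightarrow> x \<in> P)))
        = ((\<forall>x\<in>X - {i}. e2 x \<noteq> e2 i) \<and> (\<forall>x\<in>X - {i}. \<not> isl (e2 x) \<longrightarrow> (cl_adj a2 (e2 i) (e2 x) \<longleftrightarrow> x \<in> P)))"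
      using h(6-8) \<open>i \<in> X\<close> by auto
    moreover have "eq_upto r (card (pattern_centres D1 a1 e1 X P)) (card (pattern_centres D2 a2 e2 X P))"
      using h(9) P by auto
    ultimately show ?thesis
      unfolding card_pattern_centres_remove_centre[where e = e1 and D = D1 and a = a1 and P = P, OF \<open>i \<in> X\<close> c(1)]
        card_pattern_centres_remove_centre[where e = e2 and D = D2 and a = a2 and P = P, OF \<open>i \<in> X\<close> c(2)]
      by (simp add: eq_upto_add_same)
  next
    case False
    then obtain u1 u2 where u: "e1 i = Inr u1" "e2 i = Inr u2"
      using h(6)[OF \<open>i \<in> X\<close>] by (cases "e1 i"; cases "e2 i") auto
    have "eq_upto r (card (pattern_centres D1 a1 e1 X P)) (card (pattern_centres D2 a2 e2 X P))"
      "eq_upto r (card (pattern_centres D1 a1 e1 X (insert i P))) (card (pattern_centres D2 a2 e2 X (insert i P)))"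
      using h(9) P \<open>i \<in> X\<close> by (auto intro!: h(9))
    then show ?thesis
      unfolding card_pattern_centres_remove_leaf[where e = e1 and D = D1 and a = a1, OF \<open>i \<in> X\<close> u(1) P]
        card_pattern_centres_remove_leaf[where e = e2 and D = D2 and a = a2, OF \<open>i \<in> X\<close> u(2) P]
      by (rule eq_upto_add)
  qed
qed

lemma ef_inv_remove:
  assumes H: "ef_inv D1 a1 D2 a2 r X e1 e2"
  shows "ef_inv D1 a1 D2 a2 r (X - {i}) e1 e2"
proof (cases "i \<in> X")
  case False
  then show ?thesis using H by simp
next
  case True
  have "card (X - {i}) \<le> card X"
    by (rule card_Diff1_le)
  then show ?thesis
    using ef_invD[OF H] eq_upto_pattern_centres_remove[OF H True] unfolding ef_inv_def by auto
qed

lemma ef_inv_insertI: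
  assumes H: "ef_inv D1 a1 D2 a2 (Suc r) X e1 e2" and i: "i \<notin> X"
    and vw: "v \<in> cl_verts D1" "w \<in> cl_verts D2" "isl v = isl w"
    and eq: "\<And>x. x \<in> X \<Longrightarrow> (e1 x = v) = (e2 x = w)"
    and adj: "\<And>x. x \<in> X \<Longrightarrow> cl_adj a1 (e1 x) v = cl_adj a2 (e2 x) w"
    and cnt: "\<And>P. P \<subseteq> insert i X \<Longrightarrow> eq_upto r
      (card (pattern_centres D1 a1 (e1(i := v)) (insert i X) P))
      (card (pattern_centres D2 a2 (e2(i := w)) (insert i X) P))"
  shows "ef_inv D1 a1 D2 a2 r (insert i X) (e1(i := v)) (e2(i := w))"
proof -
  note h = ef_invD[OF H]
  have "\<not> cl_adj a1 v v" "\<not> cl_adj a2 w w"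
    by (simp_all add: cl_adj_same_side)
  moreover have "cl_adj a1 v (e1 x) = cl_adj a2 w (e2 x)" if "x \<in> X" for x
    using adj[OF that] by (simp add: cl_adj_sym)
  ultimately show ?thesis
    unfolding ef_inv_def using h vw eq adj cnt i
    by (auto simp: card_insert_if) metis+
qed

lemma ef_inv_extend_old:
  assumes H: "ef_inv D1 a1 D2 a2 (Suc r) X e1 e2" and i: "i \<notin> X" and j: "j \<in> X"
  shows "ef_inv D1 a1 D2 a2 r (insert i X) (e1(i := e1 j)) (e2(i := e2 j))"
proof -
  note h = ef_invD[OF H]
  show ?thesis
  proof (rule ef_inv_insertI[OF H i])
    show "e1 j \<in> cl_verts D1" "e2 j \<in> cl_verts D2" "isl (e1 j) = isl (e2 j)"
      using h(4-6)[OF j] .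
    show "(e1 x = e1 j) = (e2 x = e2 j)" "cl_adj a1 (e1 x) (e1 j) = cl_adj a2 (e2 x) (e2 j)"
      if "x \<in> X" for x
      using h(7,8)[OF that j] .
    fix P assume "P \<subseteq> insert i X"
    then have "P - {i} \<subseteq> X"
      by blast
    then have "eq_upto r (card (pattern_centres D1 a1 e1 X (P - {i}))) (card (pattern_centres D2 a2 e2 X (P - {i})))"
      by (rule eq_upto_Suc[OF h(9)])
    then show "eq_upto r (card (pattern_centres D1 a1 (e1(i := e1 j)) (insert i X) P))
        (card (pattern_centres D2 a2 (e2(i := e2 j)) (insert i X) P))"
      unfolding pattern_centres_insert_old[OF i j] using h(6)[OF j] by (simp add: eq_upto_def)
  qed
qed

lemma ef_inv_insert_centreI:
  assumes H: "ef_inv D1 a1 D2 a2 (Suc r) X e1 e2" and i: "i \<notin> X"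
    and c: "c0 \<in> pattern_centres D1 a1 e1 X P" "c1 \<in> pattern_centres D2 a2 e2 X P"
  shows "ef_inv D1 a1 D2 a2 r (insert i X) (e1(i := Inl c0)) (e2(i := Inl c1))"
proof -
  note h = ef_invD[OF H]
  have same_pattern: "(c0 \<in> pattern_centres D1 a1 e1 X Q) = (c1 \<in> pattern_centres D2 a2 e2 X Q)" for Q
    unfolding pattern_centres_change[OF c(1)] pattern_centres_change[OF c(2)] using h(6) by blast
  show ?thesis
  proof (rule ef_inv_insertI[OF H i])
    show "Inl c0 \<in> cl_verts D1" "Inl c1 \<in> cl_verts D2"
      using c by (auto simp: cl_verts_def pattern_centres_def)
    show "(e1 x = Inl c0) = (e2 x = Inl c1)" if "x \<in> X" for x
      using that c unfolding pattern_centres_def by force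
    show "cl_adj a1 (e1 x) (Inl c0) = cl_adj a2 (e2 x) (Inl c1)" if x: "x \<in> X" for x
    proof (cases "isl (e1 x)")
      case False
      then have "cl_adj a1 (Inl c0) (e1 x) = (x \<in> P)" "cl_adj a2 (Inl c1) (e2 x) = (x \<in> P)"
        using x c h(6)[OF x] unfolding pattern_centres_def by auto
      then show ?thesis
        by (simp add: cl_adj_sym)
    qed (use h(6)[OF x] cl_adj_same_side in auto)
    fix Q assume "Q \<subseteq> insert i X"
    then have "Q - {i} \<subseteq> X"
      by blast
    then have "eq_upto (Suc r) (card (pattern_centres D1 a1 e1 X (Q - {i}))) (card (pattern_centres D2 a2 e2 X (Q - {i})))"
      by (rule h(9))
    then have "eq_upto r (card (pattern_centres D1 a1 e1 X (Q - {i})) - (if c0 \<in> pattern_centres D1 a1 e1 X (Q - {i}) then 1 else 0))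
        (card (pattern_centres D2 a2 e2 X (Q - {i})) - (if c0 \<in> pattern_centres D1 a1 e1 X (Q - {i}) then 1 else 0))"
      by (rule eq_upto_Suc_diff) simp
    then have "eq_upto r (card (pattern_centres D1 a1 e1 X (Q - {i}) - {c0}))
        (card (pattern_centres D2 a2 e2 X (Q - {i}) - {c1}))"
      using same_pattern[of "Q - {i}"]
      by (auto simp: card_Diff_singleton_if finite_pattern_centres split: if_splits)
    moreover have "pattern_centres D1 a1 (e1(i := Inl c0)) (insert i X) Q = pattern_centres D1 a1 e1 X (Q - {i}) - {c0}"
      "pattern_centres D2 a2 (e2(i := Inl c1)) (insert i X) Q = pattern_centres D2 a2 e2 X (Q - {i}) - {c1}"
      unfolding pattern_centres_insert[OF i] by auto
    ultimately show "eq_upto r (card (pattern_centres D1 a1 (e1(i := Inl c0)) (insert i X) Q))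
        (card (pattern_centres D2 a2 (e2(i := Inl c1)) (insert i X) Q))"
      by simp
  qed simp
qed

lemma ef_inv_extend_centre:
  assumes H: "ef_inv D1 a1 D2 a2 (Suc r) X e1 e2" and i: "i \<notin> X"
    and c0: "c0 < D1" "Inl c0 \<notin> e1 ` X"
  shows "\<exists>w\<in>cl_verts D2. ef_inv D1 a1 D2 a2 r (insert i X) (e1(i := Inl c0)) (e2(i := w))"
proof -
  define P where "P = {x\<in>X. \<not> isl (e1 x) \<and> cl_adj a1 (Inl c0) (e1 x)}"
  have c0P: "c0 \<in> pattern_centres D1 a1 e1 X P"
    using c0 unfolding pattern_centres_def P_def by force
  then have "0 < card (pattern_centres D1 a1 e1 X P)"
    using finite_pattern_centres card_gt_0_iff by blast
  moreover have "P \<subseteq> X"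
    by (auto simp: P_def)
  ultimately have "0 < card (pattern_centres D2 a2 e2 X P)"
    using eq_upto_pos[OF ef_invD(9)[OF H]] by blast
  then obtain c1 where c1P: "c1 \<in> pattern_centres D2 a2 e2 X P"
    by (metis card_gt_0_iff ex_in_conv)
  then have "Inl c1 \<in> cl_verts D2"
    by (auto simp: cl_verts_def pattern_centres_def)
  with ef_inv_insert_centreI[OF H i c0P c1P] show ?thesis
    by blast
qed

lemma exists_leaf_label:
  assumes a: "2 \<le> a" "a \<le> 3" and B: "finite B" "card B < 2 ^ D"
  shows "\<exists>u\<in>leaf_labels D. u \<notin> B \<and> (\<forall>c<D. (u c < a) = b c)"
proof -
  define C where "C = PiE {..<D} (\<lambda>c. if b c then {0, 1} else {3, 4::nat})"
  have "card C = (\<Prod>c<D. card (if b c then {0, 1} else {3, 4::nat}))"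
    unfolding C_def by (simp add: card_PiE)
  also have "\<dots> = (\<Prod>c<D. 2)"
    by (intro prod.cong) auto
  finally have "card B < card C"
    using B by simp
  then have "\<not> C \<subseteq> B"
    using card_mono[OF B(1), of C] by linarith
  then obtain u where u: "u \<in> C" "u \<notin> B"
    by blast
  have "C \<subseteq> leaf_labels D"
    unfolding C_def leaf_labels_def by (rule PiE_mono) auto
  moreover have "(u c < a) = b c" if "c < D" for c
  proof -
    have "u c \<in> (if b c then {0, 1} else {3, 4})"
      using that by (intro PiE_mem[OF u(1)[unfolded C_def]]) simp
    then show ?thesis
      using a by (cases "b c") auto
  qed
  ultimately show ?thesis
    using u by blast
qed

lemma exists_leaf_with_pattern_counts:
  assumes a: "2 \<le> a" "a \<le> 3" and X: "finite X" "card X < 2 ^ D"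
    and k_le: "\<And>Q. Q \<subseteq> X \<Longrightarrow> k Q \<le> card (pattern_centres D a e X Q)"
    and k_leaves: "\<And>Q. Q \<subseteq> X \<Longrightarrow> k {x\<in>X. \<not> isl (e x) \<and> x \<in> Q} = k Q"
  shows "\<exists>u\<in>leaf_labels D. Inr u \<notin> e ` X \<and> (\<forall>c<D. Inl c \<in> e ` X \<longrightarrow> (u c < a) = b c) \<and>
    (\<forall>Q\<subseteq>X. card {c \<in> pattern_centres D a e X Q. u c < a} = k Q)"
proof -
  have "\<forall>Q. \<exists>T. Q \<subseteq> X \<longrightarrow> T \<subseteq> pattern_centres D a e X Q \<and> card T = k Q"
    using k_le by (meson obtain_subset_with_card_n)
  from choice[OF this] obtain T
    where T: "\<And>Q. Q \<subseteq> X \<Longrightarrow> T Q \<subseteq> pattern_centres D a e X Q \<and> card (T Q) = k Q"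
    by blast
  define pat where "pat c = {x\<in>X. \<not> isl (e x) \<and> cl_adj a (Inl c) (e x)}" for c
  have "card (projr ` e ` X) \<le> card X"
    using X card_image_le[of X e] card_image_le[of "e ` X" projr] by simp
  then have card_old: "card (projr ` e ` X) < 2 ^ D"
    using X(2) by linarith
  obtain u where u: "u \<in> leaf_labels D" "u \<notin> projr ` e ` X"
    and u_adj: "\<And>c. c < D \<Longrightarrow> (u c < a) = (if Inl c \<in> e ` X then b c else c \<in> T (pat c))"
    using exists_leaf_label[OF a _ card_old, where b = "\<lambda>c. if Inl c \<in> e ` X then b c else c \<in> T (pat c)"] X
    by blast
  have "Inr u \<notin> e ` X"
    using u(2) by (metis image_eqI sum.sel(2))
  moreover have "{c \<in> pattern_centres D a e X Q. u c < a} = T {x\<in>X. \<not> isl (e x) \<and> x \<in> Q}"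
    if "Q \<subseteq> X" for Q
  proof -
    let ?Q' = "{x\<in>X. \<not> isl (e x) \<and> x \<in> Q}"
    have "pat c = ?Q'" "Inl c \<notin> e ` X" "c < D" if "c \<in> pattern_centres D a e X Q" for c
      using that by (auto simp: pat_def pattern_centres_def)
    moreover have "T ?Q' \<subseteq> pattern_centres D a e X Q"
      using T[of ?Q'] pattern_centres_leaves_only[of D a e X Q] by auto
    ultimately show ?thesis
      using u_adj by auto
  qed
  moreover have "card (T {x\<in>X. \<not> isl (e x) \<and> x \<in> Q}) = k Q" if "Q \<subseteq> X" for Q
    using T[of "{x\<in>X. \<not> isl (e x) \<and> x \<in> Q}"] k_leaves[OF that] by auto
  ultimately show ?thesis
    using u(1) u_adj by auto
qed

lemma card_filter_not:
  assumes "finite S"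
  shows "card {c \<in> S. \<not> p c} = card S - card {c \<in> S. p c}"
proof -
  have "{c \<in> S. \<not> p c} = S - {c \<in> S. p c}"
    by auto
  then show ?thesis
    using assms by (simp add: card_Diff_subset)
qed

lemma ef_inv_insert_leafI:
  assumes H: "ef_inv D1 a1 D2 a2 (Suc r) X e1 e2" and i: "i \<notin> X"
    and u: "u \<in> leaf_labels D1" "Inr u \<notin> e1 ` X" and w: "w \<in> leaf_labels D2" "Inr w \<notin> e2 ` X"
    and adj: "\<And>x. x \<in> X \<Longrightarrow> cl_adj a1 (e1 x) (Inr u) = cl_adj a2 (e2 x) (Inr w)"
    and below: "\<And>Q. Q \<subseteq> X \<Longrightarrow> eq_upto r
      (card {c \<in> pattern_centres D1 a1 e1 X Q. u c < a1}) (card {c \<in> pattern_centres D2 a2 e2 X Q. w c < a2})"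
    and above: "\<And>Q. Q \<subseteq> X \<Longrightarrow> eq_upto r
      (card {c \<in> pattern_centres D1 a1 e1 X Q. \<not> u c < a1}) (card {c \<in> pattern_centres D2 a2 e2 X Q. \<not> w c < a2})"
  shows "ef_inv D1 a1 D2 a2 r (insert i X) (e1(i := Inr u)) (e2(i := Inr w))"
proof (rule ef_inv_insertI[OF H i])
  show "Inr u \<in> cl_verts D1" "Inr w \<in> cl_verts D2"
    using u w by (auto simp: cl_verts_def)
  show "(e1 x = Inr u) = (e2 x = Inr w)" if "x \<in> X" for x
    using that u w by force
  fix P assume "P \<subseteq> insert i X"
  then have "P - {i} \<subseteq> X"
    by blast
  moreover have "pattern_centres D1 a1 (e1(i := Inr u)) (insert i X) P =
      {c \<in> pattern_centres D1 a1 e1 X (P - {i}). (u c < a1) = (i \<in> P)}"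
    "pattern_centres D2 a2 (e2(i := Inr w)) (insert i X) P =
      {c \<in> pattern_centres D2 a2 e2 X (P - {i}). (w c < a2) = (i \<in> P)}"
    unfolding pattern_centres_insert[OF i] by auto
  ultimately show "eq_upto r (card (pattern_centres D1 a1 (e1(i := Inr u)) (insert i X) P))
      (card (pattern_centres D2 a2 (e2(i := Inr w)) (insert i X) P))"
    using below above by (cases "i \<in> P") simp_all
qed (use adj in simp_all)

lemma cl_adj_leaf_matching_centres:
  assumes H: "ef_inv D1 a1 D2 a2 r X e1 e2" and x: "x \<in> X"
    and w: "\<And>c. c < D2 \<Longrightarrow> Inl c \<in> e2 ` X \<Longrightarrow>
      (w c < a2) = (\<exists>x\<in>X. e2 x = Inl c \<and> cl_adj a1 (e1 x) (Inr u))"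
  shows "cl_adj a1 (e1 x) (Inr u) = cl_adj a2 (e2 x) (Inr w)"
proof (cases "e2 x")
  case (Inl c)
  have "c < D2"
    using ef_invD(5)[OF H x] Inl by (auto simp: cl_verts_def)
  moreover have "Inl c \<in> e2 ` X"
    using x Inl by force
  moreover have "(\<exists>x'\<in>X. e2 x' = Inl c \<and> cl_adj a1 (e1 x') (Inr u)) = cl_adj a1 (e1 x) (Inr u)"
    using ef_invD(7)[OF H _ x] Inl x by (metis (mono_tags, lifting))
  ultimately show ?thesis
    using w Inl by simp
next
  case (Inr v)
  then show ?thesis
    using cl_adj_same_side[of "e1 x" "Inr u" a1] ef_invD(6)[OF H x] by simp
qed

lemma ef_inv_extend_leaf:
  assumes a2: "2 \<le> a2" "a2 \<le> 3"
    and H: "ef_inv D1 a1 D2 a2 (Suc r) X e1 e2" and i: "i \<notin> X"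
    and u: "u \<in> leaf_labels D1" "Inr u \<notin> e1 ` X"
  shows "\<exists>w\<in>cl_verts D2. ef_inv D1 a1 D2 a2 r (insert i X) (e1(i := Inr u)) (e2(i := w))"
proof -
  note h = ef_invD[OF H]
  let ?S1 = "pattern_centres D1 a1 e1 X" and ?S2 = "pattern_centres D2 a2 e2 X"
  define k1 where "k1 Q = card {c \<in> ?S1 Q. u c < a1}" for Q
  define k2 where "k2 Q = split_answer r (card (?S1 Q)) (card (?S2 Q)) (k1 Q)" for Q
  have k1_le: "k1 Q \<le> card (?S1 Q)" for Q
    unfolding k1_def by (intro card_mono finite_pattern_centres) auto
  have k2: "k2 Q \<le> card (?S2 Q)" "eq_upto r (k1 Q) (k2 Q)"
    "eq_upto r (card (?S1 Q) - k1 Q) (card (?S2 Q) - k2 Q)" if "Q \<subseteq> X" for Q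
    using split_answer[OF h(9)[OF that] k1_le] unfolding k2_def by auto
  have "{x\<in>X. \<not> isl (e1 x) \<and> x \<in> Q} = {x\<in>X. \<not> isl (e2 x) \<and> x \<in> Q}" for Q
    using h(6) by auto
  then have "?S1 {x\<in>X. \<not> isl (e2 x) \<and> x \<in> Q} = ?S1 Q" "?S2 {x\<in>X. \<not> isl (e2 x) \<and> x \<in> Q} = ?S2 Q" for Q
    using pattern_centres_leaves_only[of D1 a1 e1 X] pattern_centres_leaves_only[of D2 a2 e2 X]
    by (metis (no_types, lifting) mem_Collect_eq)+
  then have k2_leaves: "k2 {x\<in>X. \<not> isl (e2 x) \<and> x \<in> Q} = k2 Q" for Q
    unfolding k2_def k1_def by simp
  have card_X: "card X < 2 ^ D2"
    using h(3) less_exp[of D2] by linarith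
  obtain w where w: "w \<in> leaf_labels D2" "Inr w \<notin> e2 ` X"
    and w_old: "\<And>c. c < D2 \<Longrightarrow> Inl c \<in> e2 ` X \<Longrightarrow>
      (w c < a2) = (\<exists>x\<in>X. e2 x = Inl c \<and> cl_adj a1 (e1 x) (Inr u))"
    and w_new: "\<And>Q. Q \<subseteq> X \<Longrightarrow> card {c \<in> ?S2 Q. w c < a2} = k2 Q"
    using exists_leaf_with_pattern_counts[OF a2 h(1) card_X k2(1) k2_leaves,
        where b = "\<lambda>c. \<exists>x\<in>X. e2 x = Inl c \<and> cl_adj a1 (e1 x) (Inr u)"]
    by blast
  show ?thesis
  proof (intro bexI[of _ "Inr w"] ef_inv_insert_leafI[OF H i u w])
    show "cl_adj a1 (e1 x) (Inr u) = cl_adj a2 (e2 x) (Inr w)" if "x \<in> X" for x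
      using cl_adj_leaf_matching_centres[OF H that w_old] .
    fix Q assume Q: "Q \<subseteq> X"
    show "eq_upto r (card {c \<in> ?S1 Q. u c < a1}) (card {c \<in> ?S2 Q. w c < a2})"
      using k2(2)[OF Q] w_new[OF Q] unfolding k1_def by simp
    show "eq_upto r (card {c \<in> ?S1 Q. \<not> u c < a1}) (card {c \<in> ?S2 Q. \<not> w c < a2})"
      using k2(3)[OF Q] w_new[OF Q] unfolding k1_def by (simp add: card_filter_not finite_pattern_centres)
  qed (use w(1) in \<open>auto simp: cl_verts_def\<close>)
qed

lemma ef_inv_extend:
  assumes a2: "2 \<le> a2" "a2 \<le> 3"
    and H: "ef_inv D1 a1 D2 a2 (Suc r) X e1 e2" and i: "i \<notin> X" and v: "v \<in> cl_verts D1"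
  shows "\<exists>w\<in>cl_verts D2. ef_inv D1 a1 D2 a2 r (insert i X) (e1(i := v)) (e2(i := w))"
proof (cases "v \<in> e1 ` X")
  case True
  then obtain j where j: "j \<in> X" "v = e1 j"
    by auto
  then show ?thesis
    using ef_inv_extend_old[OF H i j(1)] ef_invD(5)[OF H j(1)] by blast
next
  case False
  show ?thesis
  proof (cases v)
    case (Inl c)
    then show ?thesis
      using ef_inv_extend_centre[OF H i, of c] v False by (auto simp: cl_verts_def)
  next
    case (Inr u)
    then show ?thesis
      using ef_inv_extend_leaf[OF a2 H i, of u] v False by (auto simp: cl_verts_def)
  qed
qed

theorem sat_on_eq_if_ef_inv:
  assumes a: "2 \<le> a1" "a1 \<le> 3" "2 \<le> a2" "a2 \<le> 3"
  shows "no_root \<phi> \<Longrightarrow> qdepth \<phi> \<le> r \<Longrightarrow> fv \<phi> \<subseteq> X \<Longrightarrow> ef_inv D1 a1 D2 a2 r X e1 e2 \<Longrightarrow>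
    sat_on (cl_verts D1) (cl_adj a1) z1 e1 \<phi> = sat_on (cl_verts D2) (cl_adj a2) z2 e2 \<phi>"
proof (induction \<phi> arbitrary: r X e1 e2)
  case (FEq s t)
  then obtain x y where "s = Var x" "t = Var y"
    by (cases s; cases t) auto
  with FEq.prems show ?case
    using ef_invD(7) by auto
next
  case (FAdj s t)
  then obtain x y where "s = Var x" "t = Var y"
    by (cases s; cases t) auto
  with FAdj.prems show ?case
    using ef_invD(8) by auto
next
  case (FNot p)
  then show ?case by simp
next
  case (FAnd p q)
  then show ?case by auto
next
  case (FEx i p)
  obtain r' where r: "r = Suc r'" "qdepth p \<le> r'"
    using FEx.prems(2) by (cases r) auto
  have H: "ef_inv D1 a1 D2 a2 (Suc r') (X - {i}) e1 e2"
    using ef_inv_remove FEx.prems(4) r(1) by blast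
  have p: "no_root p" "fv p \<subseteq> insert i (X - {i})"
    using FEx.prems(1,3) by auto
  show ?case
  proof
    assume "sat_on (cl_verts D1) (cl_adj a1) z1 e1 (FEx i p)"
    then obtain v where v: "v \<in> cl_verts D1" "sat_on (cl_verts D1) (cl_adj a1) z1 (e1(i := v)) p"
      by auto
    obtain w where "w \<in> cl_verts D2" "ef_inv D1 a1 D2 a2 r' (insert i (X - {i})) (e1(i := v)) (e2(i := w))"
      using ef_inv_extend[OF a(3,4) H _ v(1)] by blast
    then show "sat_on (cl_verts D2) (cl_adj a2) z2 e2 (FEx i p)"
      using FEx.IH[OF p(1) r(2) p(2)] v(2) by auto
  next
    assume "sat_on (cl_verts D2) (cl_adj a2) z2 e2 (FEx i p)"
    then obtain w where w: "w \<in> cl_verts D2" "sat_on (cl_verts D2) (cl_adj a2) z2 (e2(i := w)) p"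
      by auto
    obtain v where "v \<in> cl_verts D1" "ef_inv D2 a2 D1 a1 r' (insert i (X - {i})) (e2(i := w)) (e1(i := v))"
      using ef_inv_extend[OF a(1,2) ef_inv_sym[OF H] _ w(1)] by blast
    then show "sat_on (cl_verts D1) (cl_adj a1) z1 e1 (FEx i p)"
      using FEx.IH[OF p(1) r(2) p(2) ef_inv_sym] w(2) by auto
  qed
qed

section \<open>Generic assignments\<close>

definition generic :: "nat \<Rightarrow> nat \<Rightarrow> nat \<Rightarrow> nat set \<Rightarrow> (nat \<Rightarrow> cl_vert) \<Rightarrow> bool" where
  "generic D a q X e \<longleftrightarrow> (\<forall>x\<in>X. \<not> isl (e x)) \<and> (\<forall>P\<subseteq>X. 2 ^ q \<le> card (pattern_centres D a e X P))"

definition generic_assignments :: "nat \<Rightarrow> nat \<Rightarrow> nat \<Rightarrow> nat set \<Rightarrow> (nat \<Rightarrow> cl_vert) set" where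
  "generic_assignments D a q X = {e \<in> X \<rightarrow>\<^sub>E cl_verts D. generic D a q X e}"

lemma generic_inj:
  assumes "generic D a q X e" "x \<in> X" "y \<in> X" "x \<noteq> y"
  shows "e x \<noteq> e y"
proof -
  have "0 < card (pattern_centres D a e X {x})"
    using assms(1,2) unfolding generic_def by (metis empty_subsetI insert_subset le_less_trans less_exp not_le zero_less_numeral zero_less_power)
  then obtain c where c: "c \<in> pattern_centres D a e X {x}"
    by (metis card_gt_0_iff ex_in_conv)
  have "\<not> isl (e x)" "\<not> isl (e y)"
    using assms unfolding generic_def by auto
  then have "cl_adj a (Inl c) (e x)" "\<not> cl_adj a (Inl c) (e y)"
    using c assms(2-4) unfolding pattern_centres_def by auto
  then show ?thesis
    by auto
qed

lemma ef_inv_if_generic: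
  assumes X: "finite X" "card X + q \<le> D1" "card X + q \<le> D2"
    and e1: "e1 \<in> generic_assignments D1 a1 q X" and e2: "e2 \<in> generic_assignments D2 a2 q X"
  shows "ef_inv D1 a1 D2 a2 q X e1 e2"
proof -
  have g: "generic D1 a1 q X e1" "generic D2 a2 q X e2"
    and v: "\<forall>x\<in>X. e1 x \<in> cl_verts D1 \<and> e2 x \<in> cl_verts D2"
    using e1 e2 unfolding generic_assignments_def by auto
  have l: "\<forall>x\<in>X. \<not> isl (e1 x) \<and> \<not> isl (e2 x)"
    using g unfolding generic_def by auto
  have "\<forall>x\<in>X. \<forall>y\<in>X. (e1 x = e1 y) = (e2 x = e2 y)"
    using generic_inj[OF g(1)] generic_inj[OF g(2)] by metis
  moreover have "\<forall>x\<in>X. \<forall>y\<in>X. cl_adj a1 (e1 x) (e1 y) = cl_adj a2 (e2 x) (e2 y)"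
    using l cl_adj_same_side by metis
  moreover have "\<forall>P\<subseteq>X. eq_upto q (card (pattern_centres D1 a1 e1 X P)) (card (pattern_centres D2 a2 e2 X P))"
    using g unfolding generic_def eq_upto_def by auto
  ultimately show ?thesis
    unfolding ef_inv_def using X v l by auto
qed

text \<open>
  On leaf assignments the centres play independent roles: centre c realises pattern P iff
  the column of labels at c lies in a fixed nonempty set of columns.
\<close>

lemma inj_on_columns:
  "inj_on (\<lambda>e :: nat \<Rightarrow> cl_vert. \<lambda>c\<in>{..<D}. \<lambda>x\<in>X. projr (e x) c) (X \<rightarrow>\<^sub>E Inr ` leaf_labels D)"
proof (rule inj_onI)
  fix e1 e2 :: "nat \<Rightarrow> cl_vert"
  assume e: "e1 \<in> X \<rightarrow>\<^sub>E Inr ` leaf_labels D" "e2 \<in> X \<rightarrow>\<^sub>E Inr ` leaf_labels D"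
    and eq: "(\<lambda>c\<in>{..<D}. \<lambda>x\<in>X. projr (e1 x) c) = (\<lambda>c\<in>{..<D}. \<lambda>x\<in>X. projr (e2 x) c)"
  show "e1 = e2"
  proof (rule PiE_ext[OF e])
    fix x assume x: "x \<in> X"
    obtain u1 u2 where u: "e1 x = Inr u1" "e2 x = Inr u2" "u1 \<in> leaf_labels D" "u2 \<in> leaf_labels D"
      using e x by blast
    have "u1 c = u2 c" if "c < D" for c
      using fun_cong[OF fun_cong[OF eq, of c], of x] that x u by simp
    then have "u1 = u2"
      using u(3,4) unfolding leaf_labels_def by (intro PiE_ext) auto
    then show "e1 x = e2 x"
      using u by simp
  qed
qed

lemma columns_leaf_assignment:
  assumes "e \<in> X \<rightarrow>\<^sub>E Inr ` leaf_labels D" "c < D"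
  shows "(\<lambda>x\<in>X. projr (e x) c) \<in> X \<rightarrow>\<^sub>E {..<5}"
    and "c \<in> pattern_centres D a e X P \<longleftrightarrow> (\<forall>x\<in>X. projr (e x) c < a \<longleftrightarrow> x \<in> P)"
proof -
  have leaf: "\<exists>u\<in>leaf_labels D. e x = Inr u" if "x \<in> X" for x
    using assms(1) that by blast
  then show "(\<lambda>x\<in>X. projr (e x) c) \<in> X \<rightarrow>\<^sub>E {..<5}"
    using assms(2) unfolding leaf_labels_def by fastforce
  show "c \<in> pattern_centres D a e X P \<longleftrightarrow> (\<forall>x\<in>X. projr (e x) c < a \<longleftrightarrow> x \<in> P)"
    using leaf assms(2) unfolding pattern_centres_def by fastforce
qed

lemma card_avoiding_pattern:
  assumes X: "finite X" and a: "1 \<le> a" "a \<le> 4" and J: "J \<subseteq> {..<D}"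
  shows "card {e \<in> X \<rightarrow>\<^sub>E Inr ` leaf_labels D. J \<inter> pattern_centres D a e X P = {}}
     \<le> (5 ^ card X - 1) ^ card J * (5 ^ card X) ^ (D - card J)"
proof -
  define W where "W = X \<rightarrow>\<^sub>E {..<5::nat}"
  define G where "G = {w \<in> W. \<forall>x\<in>X. (w x < a \<longleftrightarrow> x \<in> P)}"
  define \<tau> where "\<tau> = (\<lambda>e :: nat \<Rightarrow> cl_vert. \<lambda>c\<in>{..<D}. \<lambda>x\<in>X. projr (e x) c)"
  let ?Z = "{e \<in> X \<rightarrow>\<^sub>E Inr ` leaf_labels D. J \<inter> pattern_centres D a e X P = {}}"
  have W: "finite W" "card W = 5 ^ card X"
    unfolding W_def using X by (simp_all add: finite_PiE card_PiE)
  have "(\<lambda>x\<in>X. if x \<in> P then 0 else 4) \<in> G" and GW: "G \<subseteq> W"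
    unfolding G_def W_def using a by auto
  then have "0 < card G"
    using W(1) card_gt_0_iff finite_subset by blast
  then have "card (W - G) \<le> 5 ^ card X - 1"
    using W card_Diff_subset[OF finite_subset[OF GW W(1)] GW] by simp
  have "\<tau> e \<in> PiE {..<D} (\<lambda>c. if c \<in> J then W - G else W)" if e: "e \<in> ?Z" for e
  proof (rule PiE_I)
    fix c assume "c \<in> {..<D}"
    then have "\<tau> e c \<in> W" "c \<in> J \<Longrightarrow> \<tau> e c \<notin> G"
      using columns_leaf_assignment[where e = e and c = c] e unfolding \<tau>_def W_def G_def by auto
    then show "\<tau> e c \<in> (if c \<in> J then W - G else W)"
      by simp
  qed (simp add: \<tau>_def)
  then have "\<tau> ` ?Z \<subseteq> PiE {..<D} (\<lambda>c. if c \<in> J then W - G else W)"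
    by blast
  moreover have "inj_on \<tau> ?Z"
    unfolding \<tau>_def by (rule inj_on_subset[OF inj_on_columns]) blast
  ultimately have "card ?Z \<le> card (PiE {..<D} (\<lambda>c. if c \<in> J then W - G else W))"
    by (intro card_inj_on_le[of \<tau>]) (auto simp: W finite_PiE)
  also have "\<dots> = (\<Prod>c<D. if c \<in> J then card (W - G) else card W)"
    by (simp add: card_PiE if_distrib)
  also have "\<dots> = card (W - G) ^ card J * card W ^ (D - card J)"
    using J card_Diff_subset[OF finite_subset[OF J] J]
    by (simp add: prod.If_cases Int_absorb1 Diff_eq[symmetric])
  also have "\<dots> \<le> (5 ^ card X - 1) ^ card J * (5 ^ card X) ^ (D - card J)"
    using \<open>card (W - G) \<le> 5 ^ card X - 1\<close> W by (simp add: power_mono)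
  finally show ?thesis .
qed

lemma exists_block_avoiding:
  assumes "finite S" "card S < M"
  shows "\<exists>j<M. {j * B..<j * B + B} \<inter> S = {}"
proof (rule ccontr)
  assume "\<not> ?thesis"
  then have "\<forall>j<M. \<exists>c. c \<in> {j * B..<j * B + B} \<inter> S"
    by blast
  then obtain f where f: "\<And>j. j < M \<Longrightarrow> f j \<in> {j * B..<j * B + B} \<inter> S"
    by metis
  have "f j1 < f j2" if "j1 < j2" "j2 < M" for j1 j2
  proof -
    have "j1 * B + B \<le> j2 * B"
      using mult_le_mono1[of "Suc j1" j2 B] that by simp
    then show ?thesis
      using f[of j1] f[of j2] that by auto
  qed
  then have "inj_on f {..<M}"
    by (intro strict_mono_on_imp_inj_on) (auto simp: strict_mono_on_def)
  moreover have "f ` {..<M} \<subseteq> S"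
    using f by blast
  ultimately have "M \<le> card S"
    using card_inj_on_le[OF _ _ assms(1)] by fastforce
  then show False
    using assms(2) by simp
qed

lemma card_few_pattern_centres:
  assumes X: "finite X" and a: "1 \<le> a" "a \<le> 4" and MB: "M * B \<le> D"
  shows "card {e \<in> X \<rightarrow>\<^sub>E Inr ` leaf_labels D. card (pattern_centres D a e X P) < M}
     \<le> M * ((5 ^ card X - 1) ^ B * (5 ^ card X) ^ (D - B))"
proof -
  let ?Z = "\<lambda>j. {e \<in> X \<rightarrow>\<^sub>E Inr ` leaf_labels D. {j * B..<j * B + B} \<inter> pattern_centres D a e X P = {}}"
  have block: "{j * B..<j * B + B} \<subseteq> {..<D}" if "j < M" for j
    using mult_le_mono1[of "Suc j" M B] that MB by auto
  have "{e \<in> X \<rightarrow>\<^sub>E Inr ` leaf_labels D. card (pattern_centres D a e X P) < M} \<subseteq> (\<Union>j<M. ?Z j)"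
  proof
    fix e assume "e \<in> {e \<in> X \<rightarrow>\<^sub>E Inr ` leaf_labels D. card (pattern_centres D a e X P) < M}"
    moreover from this obtain j where "j < M" "{j * B..<j * B + B} \<inter> pattern_centres D a e X P = {}"
      using exists_block_avoiding[OF finite_pattern_centres, of D a e X P M B] by auto
    ultimately show "e \<in> (\<Union>j<M. ?Z j)"
      by blast
  qed
  then have "card {e \<in> X \<rightarrow>\<^sub>E Inr ` leaf_labels D. card (pattern_centres D a e X P) < M} \<le> card (\<Union>j<M. ?Z j)"
    by (rule card_mono[rotated]) (auto intro: finite_subset[of _ "X \<rightarrow>\<^sub>E Inr ` leaf_labels D"]
        simp: X finite_PiE finite_leaf_labels)
  also have "\<dots> \<le> (\<Sum>j<M. card (?Z j))"
    by (rule card_UN_le) simp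
  also have "\<dots> \<le> (\<Sum>j<M. (5 ^ card X - 1) ^ B * (5 ^ card X) ^ (D - B))"
    using card_avoiding_pattern[OF X a block] by (intro sum_mono) simp
  finally show ?thesis
    by simp
qed

lemma card_leaf_assignments_le:
  assumes X: "finite X" and a: "1 \<le> a" "a \<le> 4" and MB: "2 ^ q * B \<le> D"
  shows "card (X \<rightarrow>\<^sub>E (Inr ` leaf_labels D :: cl_vert set))
     \<le> card (generic_assignments D a q X) + 2 ^ card X * (2 ^ q * ((5 ^ card X - 1) ^ B * (5 ^ card X) ^ (D - B)))"
proof -
  let ?L = "X \<rightarrow>\<^sub>E (Inr ` leaf_labels D :: cl_vert set)"
  let ?Bad = "\<lambda>P. {e \<in> ?L. card (pattern_centres D a e X P) < 2 ^ q}"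
  have "?L \<subseteq> X \<rightarrow>\<^sub>E cl_verts D"
    by (rule PiE_mono) (auto simp: cl_verts_def)
  have "e \<in> generic_assignments D a q X \<union> (\<Union>P\<in>Pow X. ?Bad P)" if e: "e \<in> ?L" for e
  proof (cases "generic D a q X e")
    case True
    then show ?thesis
      using e \<open>?L \<subseteq> X \<rightarrow>\<^sub>E cl_verts D\<close> by (auto simp: generic_assignments_def)
  next
    case False
    moreover have "\<not> isl (e x)" if x: "x \<in> X" for x
    proof -
      obtain u where "e x = Inr u"
        using PiE_mem[OF e x] by blast
      then show ?thesis
        by simp
    qed
    ultimately obtain P where "P \<subseteq> X" "card (pattern_centres D a e X P) < 2 ^ q"
      unfolding generic_def by (auto simp: not_le)
    then show ?thesis
      using e by blast
  qed
  then have "card ?L \<le> card (generic_assignments D a q X \<union> (\<Union>P\<in>Pow X. ?Bad P))"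
    by (intro card_mono subsetI) (auto intro: finite_subset[of _ "X \<rightarrow>\<^sub>E cl_verts D"]
        simp: generic_assignments_def X finite_PiE finite_leaf_labels finite_cl_verts)
  also have "\<dots> \<le> card (generic_assignments D a q X) + card (\<Union>P\<in>Pow X. ?Bad P)"
    by (rule card_Un_le)
  also have "card (\<Union>P\<in>Pow X. ?Bad P) \<le> (\<Sum>P\<in>Pow X. card (?Bad P))"
    by (rule card_UN_le) (simp add: X)
  also have "\<dots> \<le> (\<Sum>P\<in>Pow X. 2 ^ q * ((5 ^ card X - 1) ^ B * (5 ^ card X) ^ (D - B)))"
    using card_few_pattern_centres[OF X a MB] by (intro sum_mono) simp
  finally show ?thesis
    using X by (simp add: card_Pow)
qed

lemma card_leaf_assignments: "finite X \<Longrightarrow> card (X \<rightarrow>\<^sub>E (Inr ` leaf_labels D :: cl_vert set)) = (5 ^ card X) ^ D"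
  by (simp add: card_PiE card_image card_leaf_labels power_mult[symmetric] mult.commute)

lemma leaf_assignment_fraction:
  "finite X \<Longrightarrow> real (card (X \<rightarrow>\<^sub>E (Inr ` leaf_labels D :: cl_vert set))) / real (card (X \<rightarrow>\<^sub>E cl_verts D))
    = (real (5 ^ D) / real (D + 5 ^ D)) ^ card X"
  by (simp add: card_PiE card_image card_leaf_labels card_cl_verts power_divide)

lemma generic_fraction_lower_bound:
  assumes X: "finite X" and a: "1 \<le> a" "a \<le> 4" and MB: "2 ^ q * B \<le> D"
  defines "\<rho> \<equiv> (real (5 ^ card X) - 1) / real (5 ^ card X)"
  shows "real (card (X \<rightarrow>\<^sub>E (Inr ` leaf_labels D :: cl_vert set))) / real (card (X \<rightarrow>\<^sub>E cl_verts D))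
      - 2 ^ card X * 2 ^ q * \<rho> ^ B
    \<le> real (card (generic_assignments D a q X)) / real (card (X \<rightarrow>\<^sub>E cl_verts D))"
proof -
  let ?A = "X \<rightarrow>\<^sub>E cl_verts D" and ?L = "X \<rightarrow>\<^sub>E (Inr ` leaf_labels D :: cl_vert set)"
    and ?G = "generic_assignments D a q X"
  define W :: real where "W = real (5 ^ card X)"
  define K :: real where "K = 2 ^ card X * 2 ^ q"
  have "1 \<le> W" "0 \<le> \<rho>"
    by (simp_all add: W_def \<rho>_def)
  have "card ?L \<le> card ?A"
    by (intro card_mono PiE_mono) (auto simp: X finite_PiE finite_leaf_labels cl_verts_def)
  have "0 < card ?A"
    by (rule order.strict_trans2[OF _ \<open>card ?L \<le> card ?A\<close>]) (simp add: X card_leaf_assignments)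
  have "B \<le> D"
    using le_trans[OF mult_le_mono1[of 1 "2 ^ q" B] MB] by simp
  then have "W ^ D = W ^ B * W ^ (D - B)"
    by (simp flip: power_add)
  then have "real ((5 ^ card X - 1) ^ B * (5 ^ card X) ^ (D - B)) = \<rho> ^ B * real (card ?L)"
    using \<open>1 \<le> W\<close> X by (simp add: card_leaf_assignments W_def \<rho>_def of_nat_diff power_divide)
  moreover define N :: nat where "N = 2 ^ card X * (2 ^ q * ((5 ^ card X - 1) ^ B * (5 ^ card X) ^ (D - B)))"
  ultimately have "real N = K * \<rho> ^ B * real (card ?L)"
    unfolding K_def by simp
  moreover have "card ?L \<le> card ?G + N"
    unfolding N_def by (rule card_leaf_assignments_le[OF X a MB])
  ultimately have "real (card ?L) \<le> real (card ?G) + K * \<rho> ^ B * real (card ?L)"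
    by (metis of_nat_add of_nat_le_iff)
  also have "\<dots> \<le> real (card ?G) + K * \<rho> ^ B * real (card ?A)"
    using \<open>0 \<le> \<rho>\<close> \<open>card ?L \<le> card ?A\<close> by (simp add: K_def mult_left_mono)
  finally have "real (card ?L) / real (card ?A) \<le> (real (card ?G) + K * \<rho> ^ B * real (card ?A)) / real (card ?A)"
    by (rule divide_right_mono) simp
  also have "\<dots> = real (card ?G) / real (card ?A) + K * \<rho> ^ B"
    using \<open>0 < card ?A\<close> by (simp add: add_divide_distrib)
  finally show ?thesis
    by (simp add: K_def)
qed

lemma power5_fraction_tendsto_1: "(\<lambda>n. real (5 ^ Suc n) / real (Suc n + 5 ^ Suc n)) \<longlonglongrightarrow> 1"
proof -
  have le: "real (Suc n) / real (Suc n + 5 ^ Suc n) \<le> (2 / 5) ^ Suc n" for n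
  proof -
    have "real (Suc n) / real (Suc n + 5 ^ Suc n) \<le> real (Suc n) / real (5 ^ Suc n :: nat)"
      by (intro divide_left_mono) (auto intro!: mult_pos_pos add_pos_nonneg)
    also have "\<dots> \<le> real (2 ^ Suc n :: nat) / real (5 ^ Suc n :: nat)"
      by (intro divide_right_mono) (use less_exp[of "Suc n"] in linarith, simp)
    also have "\<dots> = (2 / 5) ^ Suc n"
      by (simp add: power_divide)
    finally show ?thesis .
  qed
  have "(\<lambda>n. (2 / 5 :: real) ^ Suc n) \<longlonglongrightarrow> 0"
    by (rule LIMSEQ_Suc[OF LIMSEQ_power_zero]) simp
  then have "(\<lambda>n. real (Suc n) / real (Suc n + 5 ^ Suc n)) \<longlonglongrightarrow> 0"
    by (rule tendsto_sandwich[rotated 2, OF tendsto_const]) (use le in auto)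
  then have "(\<lambda>n. 1 - real (Suc n) / real (Suc n + 5 ^ Suc n)) \<longlonglongrightarrow> 1 - 0"
    by (intro tendsto_intros)
  moreover have "1 - real (Suc n) / real (Suc n + 5 ^ Suc n) = real (5 ^ Suc n) / real (Suc n + 5 ^ Suc n)" for n
  proof -
    have "0 < real (Suc n + 5 ^ Suc n)"
      by (simp only: of_nat_0_less_iff)
    then show ?thesis
      by (simp add: field_simps)
  qed
  ultimately show ?thesis
    by simp
qed

lemma filterlim_Suc_div_at_top: "0 < M \<Longrightarrow> filterlim (\<lambda>n::nat. Suc n div M) at_top sequentially"
  unfolding filterlim_at_top eventually_sequentially
proof (intro allI exI impI)
  fix Z n :: nat assume "0 < M" "Z * M \<le> n"
  then show "Z \<le> Suc n div M"
    by (metis div_le_mono le_SucI nonzero_mult_div_cancel_right not_gr0)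
qed

lemma generic_density:
  assumes X: "finite X" and a: "\<And>n. 1 \<le> a n" "\<And>n. a n \<le> 4"
  shows "(\<lambda>n. real (card (generic_assignments (Suc n) (a n) q X)) / real (card (X \<rightarrow>\<^sub>E cl_verts (Suc n))))
    \<longlonglongrightarrow> 1"
proof -
  define \<rho> :: real where "\<rho> = (real (5 ^ card X) - 1) / real (5 ^ card X)"
  define K :: real where "K = 2 ^ card X * 2 ^ q"
  have lower: "(real (5 ^ Suc n) / real (Suc n + 5 ^ Suc n)) ^ card X - K * \<rho> ^ (Suc n div 2 ^ q)
      \<le> real (card (generic_assignments (Suc n) (a n) q X)) / real (card (X \<rightarrow>\<^sub>E cl_verts (Suc n)))" for n
    unfolding K_def \<rho>_def leaf_assignment_fraction[OF X, symmetric]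
    by (rule generic_fraction_lower_bound[OF X a]) (simp add: div_times_less_eq_dividend mult.commute)
  have upper: "real (card (generic_assignments (Suc n) (a n) q X)) / real (card (X \<rightarrow>\<^sub>E cl_verts (Suc n))) \<le> 1" for n
  proof -
    have "card (generic_assignments (Suc n) (a n) q X) \<le> card (X \<rightarrow>\<^sub>E cl_verts (Suc n))"
      by (rule card_mono) (auto simp: generic_assignments_def X finite_PiE finite_cl_verts)
    then show ?thesis
      by (auto simp: divide_le_eq_1)
  qed
  have "0 \<le> \<rho>" "\<rho> < 1"
    by (auto simp: \<rho>_def field_simps)
  then have "(\<lambda>n. \<rho> ^ n) \<longlonglongrightarrow> 0"
    by (intro LIMSEQ_power_zero) simp
  then have "(\<lambda>n. \<rho> ^ (Suc n div 2 ^ q)) \<longlonglongrightarrow> 0"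
    by (rule filterlim_compose[OF _ filterlim_Suc_div_at_top]) simp
  then have "(\<lambda>n. (real (5 ^ Suc n) / real (Suc n + 5 ^ Suc n)) ^ card X - K * \<rho> ^ (Suc n div 2 ^ q))
      \<longlonglongrightarrow> 1 ^ card X - K * 0"
    by (intro tendsto_diff tendsto_power tendsto_mult tendsto_const power5_fraction_tendsto_1)
  then have lim: "(\<lambda>n. (real (5 ^ Suc n) / real (Suc n + 5 ^ Suc n)) ^ card X - K * \<rho> ^ (Suc n div 2 ^ q))
      \<longlonglongrightarrow> 1"
    by simp
  show ?thesis
    by (rule tendsto_sandwich[OF _ _ lim tendsto_const]) (use lower upper in \<open>auto intro: always_eventually\<close>)
qed

section \<open>FO convergence\<close>

lemma density_tendsto_1_if_dense_subset:
  fixes A G S :: "nat \<Rightarrow> 'a set"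
  assumes fin: "\<And>n. finite (A n)" and S: "\<And>n. S n \<subseteq> A n" and GS: "\<And>n. N \<le> n \<Longrightarrow> G n \<subseteq> S n"
    and dense: "(\<lambda>n. real (card (G n)) / real (card (A n))) \<longlonglongrightarrow> 1"
  shows "(\<lambda>n. real (card (S n)) / real (card (A n))) \<longlonglongrightarrow> 1"
proof -
  have "real (card (G n)) / real (card (A n)) \<le> real (card (S n)) / real (card (A n))" if "N \<le> n" for n
    using GS[OF that] finite_subset[OF S fin] by (intro divide_right_mono) (auto intro!: card_mono)
  then have "eventually (\<lambda>n. real (card (G n)) / real (card (A n)) \<le> real (card (S n)) / real (card (A n))) sequentially"
    by (auto simp: eventually_sequentially)
  moreover have "eventually (\<lambda>n. real (card (S n)) / real (card (A n)) \<le> 1) sequentially"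
    using card_mono[OF fin S] by (auto simp: divide_le_eq_1 intro!: always_eventually)
  ultimately show ?thesis
    using dense tendsto_const by (rule tendsto_sandwich)
qed

lemma density_tendsto_0_if_disjoint_dense:
  fixes A G S :: "nat \<Rightarrow> 'a set"
  assumes fin: "\<And>n. finite (A n)" and G: "\<And>n. G n \<subseteq> A n" and S: "\<And>n. S n \<subseteq> A n"
    and GS: "\<And>n. N \<le> n \<Longrightarrow> S n \<inter> G n = {}"
    and dense: "(\<lambda>n. real (card (G n)) / real (card (A n))) \<longlonglongrightarrow> 1"
  shows "(\<lambda>n. real (card (S n)) / real (card (A n))) \<longlonglongrightarrow> 0"
proof -
  have "real (card (S n)) / real (card (A n)) \<le> 1 - real (card (G n)) / real (card (A n))" if "N \<le> n" for n
  proof -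
    have "card (S n) + card (G n) \<le> card (A n)"
      using card_Un_disjoint[OF finite_subset[OF S fin] finite_subset[OF G fin] GS[OF that]]
        card_mono[OF fin, of "S n \<union> G n"] S G by auto
    then have "real (card (S n) + card (G n)) / real (card (A n)) \<le> 1"
      by (auto simp: divide_le_eq_1)
    then show ?thesis
      by (simp add: add_divide_distrib)
  qed
  then have upper: "eventually (\<lambda>n. real (card (S n)) / real (card (A n)) \<le> 1 - real (card (G n)) / real (card (A n))) sequentially"
    by (auto simp: eventually_sequentially)
  have lower: "eventually (\<lambda>n. 0 \<le> real (card (S n)) / real (card (A n))) sequentially"
    by (simp add: always_eventually)
  have "(\<lambda>n. 1 - real (card (G n)) / real (card (A n))) \<longlonglongrightarrow> 1 - 1"
    by (rule tendsto_diff[OF tendsto_const dense])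
  then have "(\<lambda>n. 1 - real (card (G n)) / real (card (A n))) \<longlonglongrightarrow> 0"
    by (simp only: diff_self)
  with lower upper tendsto_const show ?thesis
    by (rule tendsto_sandwich)
qed

lemma convergent_density_if_constant_on_dense:
  fixes A G S :: "nat \<Rightarrow> 'a set"
  assumes fin: "\<And>n. finite (A n)" and G: "\<And>n. G n \<subseteq> A n" and S: "\<And>n. S n \<subseteq> A n"
    and dense: "(\<lambda>n. real (card (G n)) / real (card (A n))) \<longlonglongrightarrow> 1"
    and const: "\<And>n e. N \<le> n \<Longrightarrow> e \<in> G n \<Longrightarrow> e \<in> S n \<longleftrightarrow> T"
  shows "convergent (\<lambda>n. real (card (S n)) / real (card (A n)))"
proof (cases T)
  case True
  then have "G n \<subseteq> S n" if "N \<le> n" for n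
    using const[OF that] by blast
  then show ?thesis
    using density_tendsto_1_if_dense_subset[OF fin S _ dense] by (blast intro: convergentI)
next
  case False
  then have "S n \<inter> G n = {}" if "N \<le> n" for n
    using const[OF that] by blast
  then show ?thesis
    using density_tendsto_0_if_disjoint_dense[OF fin G S _ dense] by (blast intro: convergentI)
qed

lemma convergent_stone_on_cl:
  assumes "no_root \<phi>" and a: "\<And>n. 2 \<le> a n" "\<And>n. a n \<le> 3"
  shows "convergent (\<lambda>n. stone_on (cl_verts (Suc n)) (cl_adj (a n)) z \<phi>)"
proof -
  define X q where "X = fv \<phi>" and "q = qdepth \<phi>"
  let ?A = "\<lambda>n. X \<rightarrow>\<^sub>E cl_verts (Suc n)" and ?G = "\<lambda>n. generic_assignments (Suc n) (a n) q X"
    and ?S = "\<lambda>n. {e \<in> X \<rightarrow>\<^sub>E cl_verts (Suc n). sat_on (cl_verts (Suc n)) (cl_adj (a n)) z e \<phi>}"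
  have X: "finite X"
    by (simp add: X_def finite_fv)
  have "1 \<le> a n" "a n \<le> 4" for n
    using a(1)[of n] a(2)[of n] by simp_all
  then have dense: "(\<lambda>n. real (card (?G n)) / real (card (?A n))) \<longlonglongrightarrow> 1"
    by (rule generic_density[OF X])
  then obtain N where N: "\<And>n. N \<le> n \<Longrightarrow> 0 < real (card (?G n)) / real (card (?A n))"
    using order_tendstoD(1)[OF dense, of 0] by (auto simp: eventually_sequentially)
  define m where "m = max N (card X + q)"
  have m: "card X + q \<le> Suc m"
    by (simp add: m_def)
  have "?G m \<noteq> {}"
    using N[of m] by (auto simp: m_def)
  then obtain e0 where e0: "e0 \<in> ?G m"
    by blast
  have const: "e \<in> ?S n \<longleftrightarrow> sat_on (cl_verts (Suc m)) (cl_adj (a m)) z e0 \<phi>" if "m \<le> n" "e \<in> ?G n" for n e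
  proof -
    have inv: "ef_inv (Suc n) (a n) (Suc m) (a m) q X e e0"
      using that m e0 X by (intro ef_inv_if_generic) auto
    have "sat_on (cl_verts (Suc n)) (cl_adj (a n)) z e \<phi> = sat_on (cl_verts (Suc m)) (cl_adj (a m)) z e0 \<phi>"
      by (rule sat_on_eq_if_ef_inv[OF a(1)[of n] a(2)[of n] a(1)[of m] a(2)[of m] \<open>no_root \<phi>\<close> _ _ inv])
        (simp_all add: X_def q_def)
    then show ?thesis
      using that(2) by (auto simp: generic_assignments_def)
  qed
  have "convergent (\<lambda>n. real (card (?S n)) / real (card (?A n)))"
    by (rule convergent_density_if_constant_on_dense[OF _ _ _ dense const])
      (auto simp: X finite_PiE finite_cl_verts generic_assignments_def)
  moreover have "real (card (?A n)) = real (card (cl_verts (Suc n))) ^ card (fv \<phi>)" for n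
    using X by (simp add: X_def card_PiE)
  ultimately show ?thesis
    by (simp add: stone_on_def X_def)
qed

section \<open>The sequence of graphs\<close>

definition threshold :: "nat \<Rightarrow> nat" where
  "threshold n = (if even n then 2 else 3)"

lemma threshold_bounds: "2 \<le> threshold n" "threshold n \<le> 3"
  unfolding threshold_def by auto

text \<open>The graph on D = n + 1 centres, with its vertices renamed to 0, 1, ..., |V| - 1.\<close>

definition vertex_of :: "nat \<Rightarrow> nat \<Rightarrow> cl_vert" where
  "vertex_of n = (SOME h. bij_betw h {0..<card (cl_verts (Suc n))} (cl_verts (Suc n)))"

definition cl_graph :: "nat \<Rightarrow> graph" where
  "cl_graph n = \<lparr>verts = {0..<card (cl_verts (Suc n))},
     adj = (\<lambda>x y. x \<in> {0..<card (cl_verts (Suc n))} \<and> y \<in> {0..<card (cl_verts (Suc n))} \<and>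
       cl_adj (threshold n) (vertex_of n x) (vertex_of n y))\<rparr>"

lemma bij_betw_vertex_of: "bij_betw (vertex_of n) (verts (cl_graph n)) (cl_verts (Suc n))"
  unfolding vertex_of_def cl_graph_def
  by (simp add: someI_ex[OF ex_bij_betw_nat_finite[OF finite_cl_verts]])

lemma adj_cl_graph:
  "x \<in> verts (cl_graph n) \<Longrightarrow> y \<in> verts (cl_graph n) \<Longrightarrow>
    adj (cl_graph n) x y = cl_adj (threshold n) (vertex_of n x) (vertex_of n y)"
  by (simp add: cl_graph_def)

lemma finite_graph_cl_graph: "finite_graph (cl_graph n)"
proof -
  have "cl_verts (Suc n) \<noteq> {}"
    by (auto simp: cl_verts_def)
  then have "verts (cl_graph n) \<noteq> {}"
    using finite_cl_verts by (simp add: cl_graph_def card_gt_0_iff)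
  then show ?thesis
    unfolding finite_graph_def by (auto simp: cl_graph_def cl_adj_sym cl_adj_same_side)
qed

lemma stone_rooted_cl_graph:
  "r \<in> verts (cl_graph n) \<Longrightarrow>
    stone_rooted \<phi> (cl_graph n) r = stone_on (cl_verts (Suc n)) (cl_adj (threshold n)) (vertex_of n r) \<phi>"
  by (rule stone_rooted_iso[OF bij_betw_vertex_of adj_cl_graph])

lemma some_vertex_cl_graph: "(SOME v. v \<in> verts (cl_graph n)) \<in> verts (cl_graph n)"
  using finite_graph_cl_graph[of n] unfolding finite_graph_def by (metis ex_in_conv someI_ex)

lemma FO_convergent_cl_graph: "FO_convergent cl_graph"
  unfolding FO_convergent_def
proof (intro allI impI)
  fix \<phi> assume "no_root \<phi>"
  then have "stone \<phi> (cl_graph n) = stone_on (cl_verts (Suc n)) (cl_adj (threshold n)) (Inl 0) \<phi>" for n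
    unfolding stone_def stone_rooted_cl_graph[OF some_vertex_cl_graph] by (rule stone_on_no_root)
  then show "convergent (\<lambda>n. stone \<phi> (cl_graph n))"
    using convergent_stone_on_cl[OF \<open>no_root \<phi>\<close> threshold_bounds] by simp
qed

section \<open>Centres are definable, but their degrees oscillate\<close>

definition twins :: form where
  "twins = FNot (FEx 3 (FNot (FAnd (FNot (FAnd (FAdj (Var 1) (Var 3)) (FNot (FAdj (Var 2) (Var 3)))))
                                (FNot (FAnd (FAdj (Var 2) (Var 3)) (FNot (FAdj (Var 1) (Var 3))))))))"

definition xi :: form where
  "xi = FEx 1 (FEx 2 (FAnd (FNot (FEq (Var 1) (Var 2)))
          (FAnd (FAdj (Var 0) (Var 1)) (FAnd (FAdj (Var 0) (Var 2)) twins))))"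

lemma fv_xi: "fv xi = {0}"
  by (auto simp: xi_def twins_def)

lemma no_root_xi: "no_root xi"
  by (simp add: xi_def twins_def)

definition has_twin_neighbours :: "'a set \<Rightarrow> ('a \<Rightarrow> 'a \<Rightarrow> bool) \<Rightarrow> 'a \<Rightarrow> bool" where
  "has_twin_neighbours V E x \<longleftrightarrow>
     (\<exists>y\<in>V. \<exists>z\<in>V. y \<noteq> z \<and> E x y \<and> E x z \<and> (\<forall>w\<in>V. E y w = E z w))"

lemma sat_on_xi: "sat_on V E r e xi \<longleftrightarrow> has_twin_neighbours V E (e 0)"
  by (auto simp: xi_def twins_def has_twin_neighbours_def)

lemma centre_has_twin_neighbours:
  assumes a: "2 \<le> a" and c: "c < D"
  shows "has_twin_neighbours (cl_verts D) (cl_adj a) (Inl c)"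
proof -
  define u0 where "u0 = (\<lambda>j\<in>{..<D}. 0::nat)"
  define u1 where "u1 = (\<lambda>j\<in>{..<D}. if j = c then 1 else 0::nat)"
  have "cl_adj a (Inr u0) w = cl_adj a (Inr u1) w" if "w \<in> cl_verts D" for w
  proof (cases w)
    case (Inl j)
    then have "j < D"
      using that by (auto simp: cl_verts_def)
    then show ?thesis
      using Inl a by (simp add: u0_def u1_def)
  qed simp
  moreover have "Inr u0 \<in> cl_verts D" "Inr u1 \<in> cl_verts D"
    by (auto simp: cl_verts_def leaf_labels_def u0_def u1_def)
  moreover have "(Inr u0 :: cl_vert) \<noteq> Inr u1"
  proof -
    have "u0 c \<noteq> u1 c"
      using c by (simp add: u0_def u1_def)
    then show ?thesis
      by auto
  qed
  moreover have "cl_adj a (Inl c) (Inr u0)" "cl_adj a (Inl c) (Inr u1)"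
    using a c by (auto simp: u0_def u1_def)
  ultimately show ?thesis
    unfolding has_twin_neighbours_def by (intro bexI[of _ "Inr u0"] bexI[of _ "Inr u1"]) auto
qed

lemma leaf_has_no_twin_neighbours:
  assumes a: "a \<le> 3"
  shows "\<not> has_twin_neighbours (cl_verts D) (cl_adj a) (Inr u)"
proof
  assume "has_twin_neighbours (cl_verts D) (cl_adj a) (Inr u)"
  then obtain y z where yz: "y \<in> cl_verts D" "z \<in> cl_verts D" "y \<noteq> z"
    "cl_adj a (Inr u) y" "cl_adj a (Inr u) z" and twins: "\<forall>w\<in>cl_verts D. cl_adj a y w = cl_adj a z w"
    unfolding has_twin_neighbours_def by blast
  obtain i j where ij: "y = Inl i" "z = Inl j"
    using yz(4,5) by (cases y; cases z) auto
  then have "i < D" "j < D" "i \<noteq> j"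
    using yz(1-3) by (auto simp: cl_verts_def)
  define w0 where "w0 = (\<lambda>t\<in>{..<D}. if t = i then 0 else (4::nat))"
  have "Inr w0 \<in> cl_verts D"
    by (auto simp: cl_verts_def leaf_labels_def w0_def)
  moreover have "cl_adj a y (Inr w0) \<noteq> cl_adj a z (Inr w0)"
    using ij \<open>i < D\<close> \<open>j < D\<close> \<open>i \<noteq> j\<close> yz(4) a by (auto simp: w0_def)
  ultimately show False
    using twins by blast
qed

lemma has_twin_neighbours_cl_iff:
  assumes "2 \<le> a" "a \<le> 3" and x: "x \<in> cl_verts D"
  shows "has_twin_neighbours (cl_verts D) (cl_adj a) x \<longleftrightarrow> isl x"
  using assms centre_has_twin_neighbours leaf_has_no_twin_neighbours
  by (cases x) (auto simp: cl_verts_def)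

lemma defset_xi_cl_graph: "defset xi (cl_graph n) = {v \<in> verts (cl_graph n). isl (vertex_of n v)}"
proof -
  have "sat (cl_graph n) (SOME v. v \<in> verts (cl_graph n)) (\<lambda>_. v) xi = isl (vertex_of n v)"
    if v: "v \<in> verts (cl_graph n)" for v
  proof -
    have "sat (cl_graph n) (SOME v. v \<in> verts (cl_graph n)) (\<lambda>_. v) xi
       = sat_on (cl_verts (Suc n)) (cl_adj (threshold n)) (vertex_of n (SOME v. v \<in> verts (cl_graph n)))
          (vertex_of n \<circ> (\<lambda>_. v)) xi"
      using v by (intro sat_iso[OF bij_betw_vertex_of adj_cl_graph some_vertex_cl_graph])
    also have "\<dots> = isl (vertex_of n v)"
      unfolding sat_on_xi
      using has_twin_neighbours_cl_iff[OF threshold_bounds bij_betw_apply[OF bij_betw_vertex_of v]] by simp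
    finally show ?thesis .
  qed
  then show ?thesis
    unfolding defset_def by auto
qed

lemma defset_xi_cl_graph_nonempty: "defset xi (cl_graph n) \<noteq> {}"
proof -
  have "Inl 0 \<in> cl_verts (Suc n)"
    by (simp add: cl_verts_def)
  then obtain v where "v \<in> verts (cl_graph n)" "vertex_of n v = Inl 0"
    using bij_betw_imp_surj_on[OF bij_betw_vertex_of] by (metis imageE)
  then show ?thesis
    unfolding defset_xi_cl_graph by force
qed

lemma card_PiE_singleton_Collect: "card {e \<in> {i} \<rightarrow>\<^sub>E S. Q (e i)} = card {v \<in> S. Q v}"
proof -
  have "inj_on (\<lambda>e. e i) {e \<in> {i} \<rightarrow>\<^sub>E S. Q (e i)}"
    by (rule inj_onI) (rule PiE_ext, auto)
  moreover have "(\<lambda>e. e i) ` {e \<in> {i} \<rightarrow>\<^sub>E S. Q (e i)} = {v \<in> S. Q v}"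
  proof
    show "{v \<in> S. Q v} \<subseteq> (\<lambda>e. e i) ` {e \<in> {i} \<rightarrow>\<^sub>E S. Q (e i)}"
    proof
      fix v assume "v \<in> {v \<in> S. Q v}"
      then have "(\<lambda>j\<in>{i}. v) \<in> {e \<in> {i} \<rightarrow>\<^sub>E S. Q (e i)}"
        by auto
      then show "v \<in> (\<lambda>e. e i) ` {e \<in> {i} \<rightarrow>\<^sub>E S. Q (e i)}"
        by (rule image_eqI[rotated]) simp
    qed
  qed auto
  ultimately show ?thesis
    using card_image by fastforce
qed

lemma card_leaf_labels_below:
  assumes c: "c < D" and a: "a \<le> 5"
  shows "card {u \<in> leaf_labels D. u c < a} = a * 5 ^ (D - 1)"
proof -
  have "{u \<in> leaf_labels D. u c < a} = PiE {..<D} (\<lambda>j. if j = c then {..<a} else {..<5})"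
  proof (intro equalityI subsetI)
    fix u assume "u \<in> {u \<in> leaf_labels D. u c < a}"
    then show "u \<in> PiE {..<D} (\<lambda>j. if j = c then {..<a} else {..<5})"
      by (auto simp: leaf_labels_def PiE_iff)
  next
    fix u assume u: "u \<in> PiE {..<D} (\<lambda>j. if j = c then {..<a} else {..<5})"
    have u_mem: "u j \<in> (if j = c then {..<a} else {..<5})" if "j < D" for j
      by (rule PiE_mem[OF u]) (simp add: that)
    then have "u j < 5" if "j < D" for j
      using u_mem[OF that] a by (cases "j = c") auto
    moreover have "u c < a"
      using u_mem[OF c] by simp
    ultimately show "u \<in> {u \<in> leaf_labels D. u c < a}"
      using u by (auto simp: leaf_labels_def PiE_iff)
  qed
  then have "card {u \<in> leaf_labels D. u c < a} = (\<Prod>j<D. card (if j = c then {..<a} else {..<5::nat}))"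
    by (simp add: card_PiE)
  also have "\<dots> = (\<Prod>j<D. if j = c then a else 5)"
    by (intro prod.cong) auto
  also have "\<dots> = a * 5 ^ (D - 1)"
    using c by (simp add: prod.If_cases Int_absorb1 Diff_eq[symmetric])
  finally show ?thesis .
qed

lemma stone_rooted_adj_root:
  assumes r: "r \<in> defset xi (cl_graph n)"
  shows "stone_rooted (FAdj Rt (Var 0)) (cl_graph n) r = real (threshold n * 5 ^ n) / real (Suc n + 5 ^ Suc n)"
proof -
  have r': "r \<in> verts (cl_graph n)" "isl (vertex_of n r)"
    using r unfolding defset_xi_cl_graph by auto
  then obtain c where c: "vertex_of n r = Inl c"
    by (cases "vertex_of n r") auto
  have "c < Suc n"
    using bij_betw_apply[OF bij_betw_vertex_of r'(1)] c by (auto simp: cl_verts_def)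
  have "card {e \<in> {0::nat} \<rightarrow>\<^sub>E cl_verts (Suc n). cl_adj (threshold n) (Inl c) (e 0)}
      = card {v \<in> cl_verts (Suc n). cl_adj (threshold n) (Inl c) v}"
    by (rule card_PiE_singleton_Collect)
  also have "{v \<in> cl_verts (Suc n). cl_adj (threshold n) (Inl c) v} = Inr ` {u \<in> leaf_labels (Suc n). u c < threshold n}"
    by (auto simp: cl_verts_def)
  also have "card \<dots> = threshold n * 5 ^ n"
    using card_leaf_labels_below[OF \<open>c < Suc n\<close>, of "threshold n"] threshold_bounds[of n]
    by (simp add: card_image)
  finally have num: "card {e \<in> {0::nat} \<rightarrow>\<^sub>E cl_verts (Suc n). cl_adj (threshold n) (Inl c) (e 0)} = threshold n * 5 ^ n" .
  have "stone_on (cl_verts (Suc n)) (cl_adj (threshold n)) (Inl c) (FAdj Rt (Var 0)) =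
      real (card {e \<in> {0::nat} \<rightarrow>\<^sub>E cl_verts (Suc n). cl_adj (threshold n) (Inl c) (e 0)}) / real (Suc n + 5 ^ Suc n)"
    by (simp add: stone_on_def card_cl_verts)
  then show ?thesis
    unfolding stone_rooted_cl_graph[OF r'(1)] c num .
qed

lemma not_convergent_adj_root:
  assumes r: "\<And>n. r n \<in> defset xi (cl_graph n)"
  shows "\<not> convergent (\<lambda>n. stone_rooted (FAdj Rt (Var 0)) (cl_graph n) (r n))"
proof
  assume "convergent (\<lambda>n. stone_rooted (FAdj Rt (Var 0)) (cl_graph n) (r n))"
  then obtain L where L: "(\<lambda>n. stone_rooted (FAdj Rt (Var 0)) (cl_graph n) (r n)) \<longlonglongrightarrow> L"
    unfolding convergent_def by blast
  define \<rho> where "\<rho> n = real (5 ^ Suc n) / real (Suc n + 5 ^ Suc n)" for n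
  have val: "stone_rooted (FAdj Rt (Var 0)) (cl_graph n) (r n) = real (threshold n) / 5 * \<rho> n" for n
    unfolding stone_rooted_adj_root[OF r] \<rho>_def by (simp add: field_simps)
  have "\<rho> n \<noteq> 0" for n
    unfolding \<rho>_def by (simp only: divide_eq_0_iff of_nat_eq_0_iff) simp
  then have "real (threshold n) = 5 * (stone_rooted (FAdj Rt (Var 0)) (cl_graph n) (r n) / \<rho> n)" for n
    unfolding val by simp
  moreover have "(\<lambda>n. 5 * (stone_rooted (FAdj Rt (Var 0)) (cl_graph n) (r n) / \<rho> n)) \<longlonglongrightarrow> 5 * (L / 1)"
    using power5_fraction_tendsto_1 unfolding \<rho>_def[abs_def] by (intro tendsto_intros L) simp_all
  ultimately have lim: "(\<lambda>n. real (threshold n)) \<longlonglongrightarrow> 5 * L"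
    by simp
  have "(\<lambda>n. real (threshold (Suc n)) - real (threshold n)) \<longlonglongrightarrow> 5 * L - 5 * L"
    by (intro tendsto_diff LIMSEQ_Suc[OF lim] lim)
  moreover have "\<bar>real (threshold (Suc n)) - real (threshold n)\<bar> = 1" for n
    unfolding threshold_def by auto
  ultimately show False
    using tendsto_rabs[of _ 0 sequentially] LIMSEQ_const_iff[of "1::real" 0] by fastforce
qed

theorem proposition7:
  shows "\<exists>(G :: nat \<Rightarrow> graph) \<xi>.
     (\<forall>n. finite_graph (G n)) \<and> FO_convergent G \<and>
     no_root \<xi> \<and> fv \<xi> = {0} \<and>
     (\<forall>n. defset \<xi> (G n) \<noteq> {}) \<and>
     \<not> (\<exists>r. (\<forall>n. r n \<in> defset \<xi> (G n)) \<and> FO_convergent_rooted G r)"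
proof (intro exI conjI)
  show "\<forall>n. finite_graph (cl_graph n)"
    using finite_graph_cl_graph by blast
  show "FO_convergent cl_graph"
    by (rule FO_convergent_cl_graph)
  show "no_root xi" "fv xi = {0}"
    by (rule no_root_xi, rule fv_xi)
  show "\<forall>n. defset xi (cl_graph n) \<noteq> {}"
    using defset_xi_cl_graph_nonempty by blast
  show "\<not> (\<exists>r. (\<forall>n. r n \<in> defset xi (cl_graph n)) \<and> FO_convergent_rooted cl_graph r)"
    unfolding FO_convergent_rooted_def using not_convergent_adj_root by blast
qed

end
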